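(* If $L$ is an oriented classical link, then its forbidden matrix $\mathcal{FM}(L)$ is symmetric.
   Context: An oriented (classical or virtual) link with $n$ components is represented by a signed Gauss diagram: $n$ oriented circles, one per component, with arrows from over-crossing point to under-crossing point, each arrow carrying the sign $\pm1$ of its crossing. A classical link is one representable by a planar link diagram. The forbidden moves are: interchange two adjacent arrowheads, or two adjacent arrow tails, on a circle. Using forbidden and Reidemeister moves, a Gauss diagram can be reduced to one with no arrow having both endpoints on the same circle and in which, for each ordered pair $(j,k)$ of distinct circles, all arrows from circle $j$ to circle $k$ have the same sign. The forbidden quiver $\mathcal{FQ}(L)$ is obtained by shrinking each circle of this reduced diagram to a vertex; $m$ parallel arrows of sign $\varepsilon$ from vertex $j$ to vertex $k$ are recorded as a single arrow with integer label $\varepsilon m$. The forbidden matrix $\mathcal{FM}(L)$ is the $n\times n$ integer matrix whose $(j,k)$ entry is the label on the arrow from vertex $j$ to vertex $k$ of $\mathcal{FQ}(L)$ ($0$ if there is none). *)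

theory Defs
  imports "HOL-Analysis.Analysis"
begin

datatype endpt = Tl nat | Hd nat

fun arrow_of :: "endpt \<Rightarrow> nat" where
  "arrow_of (Tl a) = a"
| "arrow_of (Hd a) = a"

text \<open>A Gauss diagram: circle j (j < length ws) carries the cyclic word ws!j of
  arrow endpoints, read along its orientation (starting at an arbitrary base point);
  sg a is the sign of arrow a (0 for ids not used).\<close>
type_synonym gd = "endpt list list \<times> (nat \<Rightarrow> int)"

definition gd_arrows :: "gd \<Rightarrow> nat set" where
  "gd_arrows D = {a. \<exists>w\<in>set (fst D). Tl a \<in> set w \<or> Hd a \<in> set w}"

definition wf_gd :: "gd \<Rightarrow> bool" where
  "wf_gd D \<longleftrightarrow>
     distinct (concat (fst D)) \<and>
     (\<forall>a. (\<exists>w\<in>set (fst D). Tl a \<in> set w) \<longleftrightarrow> (\<exists>w\<in>set (fst D). Hd a \<in> set w)) \<and>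
     (\<forall>a. if a \<in> gd_arrows D then snd D a = 1 \<or> snd D a = -1 else snd D a = 0)"

definition circ :: "gd \<Rightarrow> endpt \<Rightarrow> nat" where
  "circ D e = (THE j. j < length (fst D) \<and> e \<in> set (fst D ! j))"

definition adjacent_in :: "gd \<Rightarrow> endpt \<Rightarrow> endpt \<Rightarrow> bool" where
  "adjacent_in D e1 e2 \<longleftrightarrow>
     (\<exists>j u v. j < length (fst D) \<and> fst D ! j = u @ [e1, e2] @ v)"

definition relabel :: "(endpt \<Rightarrow> endpt) \<Rightarrow> gd \<Rightarrow> gd" where
  "relabel \<sigma> D = (map (map \<sigma>) (fst D), snd D)"

definition swap_ep :: "endpt \<Rightarrow> endpt \<Rightarrow> endpt \<Rightarrow> endpt" where
  "swap_ep e1 e2 e = (if e = e1 then e2 else if e = e2 then e1 else e)"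

definition delete_arrows :: "nat set \<Rightarrow> gd \<Rightarrow> gd" where
  "delete_arrows A D =
     (map (filter (\<lambda>e. arrow_of e \<notin> A)) (fst D), (\<lambda>a. if a \<in> A then 0 else snd D a))"

text \<open>Change of base point on circle j (the words are cyclic).\<close>
definition rot_move :: "gd \<Rightarrow> gd \<Rightarrow> bool" where
  "rot_move D D' \<longleftrightarrow>
     (\<exists>j < length (fst D). D' = ((fst D)[j := rotate1 (fst D ! j)], snd D))"

definition forbidden_move :: "gd \<Rightarrow> gd \<Rightarrow> bool" where
  "forbidden_move D D' \<longleftrightarrow>
     (\<exists>a b. a \<noteq> b \<and>
        ((adjacent_in D (Hd a) (Hd b) \<and> D' = relabel (swap_ep (Hd a) (Hd b)) D) \<or>
         (adjacent_in D (Tl a) (Tl b) \<and> D' = relabel (swap_ep (Tl a) (Tl b)) D)))"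

definition R1_move :: "gd \<Rightarrow> gd \<Rightarrow> bool" where
  "R1_move D D' \<longleftrightarrow>
     (\<exists>a. (adjacent_in D (Tl a) (Hd a) \<or> adjacent_in D (Hd a) (Tl a)) \<and>
          D' = delete_arrows {a} D)"

definition R2_move :: "gd \<Rightarrow> gd \<Rightarrow> bool" where
  "R2_move D D' \<longleftrightarrow>
     (\<exists>a b. a \<noteq> b \<and> a \<in> gd_arrows D \<and> b \<in> gd_arrows D \<and> snd D a = - snd D b \<and>
        (adjacent_in D (Tl a) (Tl b) \<or> adjacent_in D (Tl b) (Tl a)) \<and>
        (adjacent_in D (Hd a) (Hd b) \<or> adjacent_in D (Hd b) (Hd a)) \<and>
        D' = delete_arrows {a, b} D)"

text \<open>Strands top/middle/bottom; arrow x: top to middle,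
  y: top to bottom, z: middle to bottom. The three pairs of endpoints
  (Tl x,Tl y), (Hd x,Tl z), (Hd y,Hd z) are adjacent; pT, pM, pB are +1 if
  the pair occurs in the listed order and -1 otherwise.  The move reverses the
  three pairs; it exists iff sg y * sg z = pT * pM and sg x * sg z = pT * pB
  (this is exactly the set of sign/order configurations realised by three
  strands forming a small triangle in the plane).\<close>
definition ord_sign :: "gd \<Rightarrow> endpt \<Rightarrow> endpt \<Rightarrow> int" where
  "ord_sign D e1 e2 = (if adjacent_in D e1 e2 then 1 else -1)"

definition R3_move :: "gd \<Rightarrow> gd \<Rightarrow> bool" where
  "R3_move D D' \<longleftrightarrow>
     (\<exists>x y z. distinct [x, y, z] \<and> {x, y, z} \<subseteq> gd_arrows D \<and>
        (adjacent_in D (Tl x) (Tl y) \<or> adjacent_in D (Tl y) (Tl x)) \<and>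
        (adjacent_in D (Hd x) (Tl z) \<or> adjacent_in D (Tl z) (Hd x)) \<and>
        (adjacent_in D (Hd y) (Hd z) \<or> adjacent_in D (Hd z) (Hd y)) \<and>
        snd D y * snd D z = ord_sign D (Tl x) (Tl y) * ord_sign D (Hd x) (Tl z) \<and>
        snd D x * snd D z = ord_sign D (Tl x) (Tl y) * ord_sign D (Hd y) (Hd z) \<and>
        D' = relabel (swap_ep (Tl x) (Tl y) \<circ> swap_ep (Hd x) (Tl z) \<circ> swap_ep (Hd y) (Hd z)) D)"

definition gd_step :: "gd \<Rightarrow> gd \<Rightarrow> bool" where
  "gd_step D D' \<longleftrightarrow> wf_gd D \<and> wf_gd D' \<and>
     (rot_move D D' \<or> forbidden_move D D' \<or> R1_move D D' \<or> R2_move D D' \<or> R3_move D D')"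

definition gd_equiv :: "gd \<Rightarrow> gd \<Rightarrow> bool" where
  "gd_equiv = (symclp gd_step)\<^sup>*\<^sup>*"

definition reduced_gd :: "gd \<Rightarrow> bool" where
  "reduced_gd D \<longleftrightarrow> wf_gd D \<and>
     (\<forall>a\<in>gd_arrows D. circ D (Tl a) \<noteq> circ D (Hd a)) \<and>
     (\<forall>a\<in>gd_arrows D. \<forall>b\<in>gd_arrows D.
        circ D (Tl a) = circ D (Tl b) \<and> circ D (Hd a) = circ D (Hd b) \<longrightarrow> snd D a = snd D b)"

text \<open>Entry (j,k): for a reduced diagram, the m arrows from circle j to circle k
  all have the same sign \<epsilon>, so this sum is the label \<epsilon> m (0 if there is none).\<close>
definition forbidden_matrix :: "gd \<Rightarrow> nat \<Rightarrow> nat \<Rightarrow> int" where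
  "forbidden_matrix D j k =
     (\<Sum>a\<in>{a\<in>gd_arrows D. circ D (Tl a) = j \<and> circ D (Hd a) = k}. snd D a)"

text \<open>A planar link diagram: n smooth (C^1, regular) closed curves gamma j in the
  plane (period 1), whose only multiple points are transverse double points; the
  double points are exactly the arrows, the tail lying on the over-strand and the
  head on the under-strand, and the sign of the crossing is the sign of
  det(over-tangent, under-tangent).\<close>
definition planar_gd :: "gd \<Rightarrow> bool" where
  "planar_gd D \<longleftrightarrow> wf_gd D \<and>
    (\<exists>(\<gamma> :: nat \<Rightarrow> real \<Rightarrow> complex) \<gamma>' (pos :: endpt \<Rightarrow> real).
       (\<forall>j < length (fst D).
          (\<forall>t. (\<gamma> j has_vector_derivative \<gamma>' j t) (at t) \<and> \<gamma>' j t \<noteq> 0 \<and> \<gamma> j (t + 1) = \<gamma> j t) \<and>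
          continuous_on UNIV (\<gamma>' j) \<and>
          sorted_wrt (<) (map pos (fst D ! j)) \<and>
          (\<forall>e\<in>set (fst D ! j). 0 \<le> pos e \<and> pos e < 1)) \<and>
       (\<forall>a\<in>gd_arrows D.
          \<gamma> (circ D (Tl a)) (pos (Tl a)) = \<gamma> (circ D (Hd a)) (pos (Hd a)) \<and>
          of_int (snd D a) =
            sgn (Im (cnj (\<gamma>' (circ D (Tl a)) (pos (Tl a))) * \<gamma>' (circ D (Hd a)) (pos (Hd a))))) \<and>
       (\<forall>j < length (fst D). \<forall>k < length (fst D). \<forall>s\<in>{0..<1}. \<forall>t\<in>{0..<1}.
          \<gamma> j s = \<gamma> k t \<and> (j, s) \<noteq> (k, t) \<longrightarrow>
          (\<exists>a\<in>gd_arrows D.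
             ((j, s) = (circ D (Tl a), pos (Tl a)) \<and> (k, t) = (circ D (Hd a), pos (Hd a))) \<or>
             ((k, t) = (circ D (Tl a), pos (Tl a)) \<and> (j, s) = (circ D (Hd a), pos (Hd a))))))"

end

theory Submission
  imports Defs "HOL-Complex_Analysis.Complex_Analysis"
begin

text \<open>For j \<noteq> k the entry (j, k) of the forbidden matrix is the sum of the signs of the arrows
  from circle j to circle k.  Base point changes, forbidden moves and Reidemeister III permute
  endpoints within circles, Reidemeister I deletes an arrow with both ends on one circle, and
  Reidemeister II deletes two arrows of opposite signs joining the same circles; so these sums
  are invariants, and it suffices to show that they are symmetric for a planar diagram.

  There, realise components j and k by closed plane curves \<gamma> j and \<gamma> k and follow
  the winding number of \<gamma> k around the moving point \<gamma> j s.  It is constant away from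
  crossings, and at a transversal crossing it jumps by the sign of the crossing: near the
  crossing, \<gamma> k can be replaced by a chord, and the two sides of the chord are separated by a
  small triangle.  Over a full period the winding number returns to its initial value, so the
  crossing signs add up to zero.  Crossings where \<gamma> j passes over \<gamma> k contribute the
  entry (j, k) with a minus sign and those where it passes under contribute the entry (k, j).\<close>

section \<open>Invariance of the off-diagonal entries under the moves\<close>

lemma distinct_concat_nth_eq:
  assumes "distinct (concat ws)" "i < length ws" "j < length ws"
    and "e \<in> set (ws ! i)" "e \<in> set (ws ! j)"
  shows "i = j"
  using assms
proof (induction ws arbitrary: i j)
  case Nil then show ?case by simp
next
  case (Cons w ws)
  then show ?case
    by (cases i; cases j) (auto, (metis UN_I disjoint_iff nth_mem)+)
qed

lemma circ_eqI:
  assumes "distinct (concat (fst D))" "j < length (fst D)" "e \<in> set (fst D ! j)"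
  shows "circ D e = j"
  unfolding circ_def
proof (rule the_equality)
  show "j < length (fst D) \<and> e \<in> set (fst D ! j)" using assms by simp
  show "\<And>i. i < length (fst D) \<and> e \<in> set (fst D ! i) \<Longrightarrow> i = j"
    using assms distinct_concat_nth_eq by metis
qed

lemma gd_arrows_conv_nth:
  "gd_arrows D = {a. \<exists>j<length (fst D). Tl a \<in> set (fst D ! j) \<or> Hd a \<in> set (fst D ! j)}"
  unfolding gd_arrows_def set_conv_nth[of "fst D"] by blast

lemma finite_gd_arrows: "finite (gd_arrows D)"
proof -
  have "gd_arrows D \<subseteq> arrow_of ` set (concat (fst D))"
    unfolding gd_arrows_def by (force simp: image_iff intro: bexI[of _ "Tl _"] bexI[of _ "Hd _"])
  then show ?thesis by (rule finite_subset) simp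
qed

definition arrows_from_to :: "gd \<Rightarrow> nat \<Rightarrow> nat \<Rightarrow> nat set" where
  "arrows_from_to D j k = {a\<in>gd_arrows D. circ D (Tl a) = j \<and> circ D (Hd a) = k}"

lemma forbidden_matrix_eq_sum: "forbidden_matrix D j k = (\<Sum>a\<in>arrows_from_to D j k. snd D a)"
  by (simp add: forbidden_matrix_def arrows_from_to_def)

lemma finite_arrows_from_to: "finite (arrows_from_to D j k)"
  using finite_gd_arrows by (simp add: arrows_from_to_def)

lemma wf_gd_distinct: "wf_gd D \<Longrightarrow> distinct (concat (fst D))"
  unfolding wf_gd_def by simp

lemma wf_gd_endpoint_circle:
  assumes "wf_gd D" "a \<in> gd_arrows D" "e \<in> {Tl a, Hd a}"
  shows "circ D e < length (fst D)" "e \<in> set (fst D ! circ D e)"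
proof -
  have "\<exists>w\<in>set (fst D). e \<in> set w"
    using assms unfolding wf_gd_def gd_arrows_def by blast
  then obtain i where "i < length (fst D)" "e \<in> set (fst D ! i)" by (metis in_set_conv_nth)
  then show "circ D e < length (fst D)" "e \<in> set (fst D ! circ D e)"
    using circ_eqI[OF wf_gd_distinct[OF assms(1)]] by simp_all
qed

lemma adjacent_in_same_circle:
  assumes "adjacent_in D e1 e2" "distinct (concat (fst D))" "j < length (fst D)"
  shows "e1 \<in> set (fst D ! j) \<longleftrightarrow> e2 \<in> set (fst D ! j)"
proof -
  obtain i u v where "i < length (fst D)" "fst D ! i = u @ [e1, e2] @ v"
    using assms(1) unfolding adjacent_in_def by blast
  moreover have "e1 \<in> set (fst D ! i)" "e2 \<in> set (fst D ! i)"
    using calculation by simp_all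
  ultimately show ?thesis
    using distinct_concat_nth_eq[OF assms(2) _ assms(3)] by metis
qed

lemma adjacent_in_circ_eq:
  assumes "adjacent_in D e1 e2" "distinct (concat (fst D))"
  shows "circ D e1 = circ D e2"
proof -
  obtain i u v where "i < length (fst D)" "fst D ! i = u @ [e1, e2] @ v"
    using assms(1) unfolding adjacent_in_def by blast
  then show ?thesis using circ_eqI[OF assms(2)] by simp
qed

lemma swap_ep_image_circle:
  assumes "adjacent_in D e1 e2 \<or> adjacent_in D e2 e1" "distinct (concat (fst D))"
    and "j < length (fst D)"
  shows "swap_ep e1 e2 ` set (fst D ! j) = set (fst D ! j)"
proof -
  have "e1 \<in> set (fst D ! j) \<longleftrightarrow> e2 \<in> set (fst D ! j)"
    using assms adjacent_in_same_circle by metis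
  then show ?thesis unfolding swap_ep_def by (auto simp: image_iff)
qed

lemma forbidden_matrix_cong:
  assumes "length (fst D') = length (fst D)"
    and "\<And>j. j < length (fst D) \<Longrightarrow> set (fst D' ! j) = set (fst D ! j)"
    and "snd D' = snd D"
  shows "forbidden_matrix D' = forbidden_matrix D"
proof -
  have "circ D' = circ D"
    unfolding circ_def using assms by (intro ext) (metis (no_types, lifting))
  moreover have "gd_arrows D' = gd_arrows D"
    unfolding gd_arrows_conv_nth using assms by auto
  ultimately show ?thesis unfolding forbidden_matrix_def assms(3) by simp
qed

lemma forbidden_matrix_relabel:
  assumes "\<And>j. j < length (fst D) \<Longrightarrow> \<sigma> ` set (fst D ! j) = set (fst D ! j)"
  shows "forbidden_matrix (relabel \<sigma> D) = forbidden_matrix D"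
  by (rule forbidden_matrix_cong) (use assms in \<open>auto simp: relabel_def\<close>)

lemma forbidden_matrix_rot_move:
  assumes "rot_move D D'"
  shows "forbidden_matrix D' = forbidden_matrix D"
proof -
  obtain i where "i < length (fst D)" "D' = ((fst D)[i := rotate1 (fst D ! i)], snd D)"
    using assms unfolding rot_move_def by blast
  then show ?thesis by (intro forbidden_matrix_cong) (auto simp: nth_list_update)
qed

lemma forbidden_matrix_forbidden_move:
  assumes "forbidden_move D D'" "distinct (concat (fst D))"
  shows "forbidden_matrix D' = forbidden_matrix D"
proof -
  obtain e1 e2 where "adjacent_in D e1 e2" "D' = relabel (swap_ep e1 e2) D"
    using assms(1) unfolding forbidden_move_def by blast
  then show ?thesis
    using forbidden_matrix_relabel swap_ep_image_circle[OF _ assms(2)] by metis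
qed

lemma forbidden_matrix_R3_move:
  assumes "R3_move D D'" "distinct (concat (fst D))"
  shows "forbidden_matrix D' = forbidden_matrix D"
proof -
  obtain x y z where xyz:
      "adjacent_in D (Tl x) (Tl y) \<or> adjacent_in D (Tl y) (Tl x)"
      "adjacent_in D (Hd x) (Tl z) \<or> adjacent_in D (Tl z) (Hd x)"
      "adjacent_in D (Hd y) (Hd z) \<or> adjacent_in D (Hd z) (Hd y)"
      "D' = relabel (swap_ep (Tl x) (Tl y) \<circ> swap_ep (Hd x) (Tl z) \<circ> swap_ep (Hd y) (Hd z)) D"
    using assms(1) unfolding R3_move_def by blast
  have "swap_ep (Tl x) (Tl y) ` swap_ep (Hd x) (Tl z) ` swap_ep (Hd y) (Hd z) ` set (fst D ! j)
      = set (fst D ! j)" if "j < length (fst D)" for j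
    using swap_ep_image_circle[OF xyz(1) assms(2) that] swap_ep_image_circle[OF xyz(2) assms(2) that]
      swap_ep_image_circle[OF xyz(3) assms(2) that] by simp
  then show ?thesis
    unfolding xyz(4) by (intro forbidden_matrix_relabel) (simp only: image_comp[symmetric])
qed

lemma delete_arrows_simps:
  shows "gd_arrows (delete_arrows A D) = gd_arrows D - A"
    and "arrow_of e \<notin> A \<Longrightarrow> circ (delete_arrows A D) e = circ D e"
    and "a \<notin> A \<Longrightarrow> snd (delete_arrows A D) a = snd D a"
proof -
  show "gd_arrows (delete_arrows A D) = gd_arrows D - A"
    unfolding gd_arrows_def delete_arrows_def by auto
  show "arrow_of e \<notin> A \<Longrightarrow> circ (delete_arrows A D) e = circ D e"
    unfolding circ_def delete_arrows_def
    by (intro arg_cong[where f=The] ext) (auto simp: nth_map)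
  show "a \<notin> A \<Longrightarrow> snd (delete_arrows A D) a = snd D a"
    unfolding delete_arrows_def by simp
qed

lemma forbidden_matrix_delete_arrows:
  "forbidden_matrix D j k
     = forbidden_matrix (delete_arrows A D) j k + (\<Sum>a\<in>arrows_from_to D j k \<inter> A. snd D a)"
proof -
  have "forbidden_matrix (delete_arrows A D) j k = (\<Sum>a\<in>arrows_from_to D j k - A. snd D a)"
    unfolding forbidden_matrix_def arrows_from_to_def delete_arrows_simps(1)
    by (rule sum.cong) (auto simp: delete_arrows_simps)
  then show ?thesis
    using sum.Int_Diff[OF finite_arrows_from_to, of "\<lambda>a. snd D a" D j k A]
    by (simp add: forbidden_matrix_eq_sum)
qed

lemma forbidden_matrix_R1_move:
  assumes "R1_move D D'" "distinct (concat (fst D))" "j \<noteq> k"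
  shows "forbidden_matrix D' j k = forbidden_matrix D j k"
proof -
  obtain a where a: "adjacent_in D (Tl a) (Hd a) \<or> adjacent_in D (Hd a) (Tl a)"
      "D' = delete_arrows {a} D"
    using assms(1) unfolding R1_move_def by blast
  have "circ D (Tl a) = circ D (Hd a)" using a(1) adjacent_in_circ_eq assms(2) by metis
  then have "arrows_from_to D j k \<inter> {a} = {}"
    using assms(3) by (auto simp: arrows_from_to_def)
  then show ?thesis using forbidden_matrix_delete_arrows[of D j k "{a}"] a(2) by simp
qed

text \<open>The two deleted arrows join the same ordered pair of circles and have opposite signs.\<close>
lemma forbidden_matrix_R2_move:
  assumes "R2_move D D'" "distinct (concat (fst D))"
  shows "forbidden_matrix D' j k = forbidden_matrix D j k"
proof -
  obtain a b where ab: "a \<noteq> b" "a \<in> gd_arrows D" "b \<in> gd_arrows D" "snd D a = - snd D b"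
      "adjacent_in D (Tl a) (Tl b) \<or> adjacent_in D (Tl b) (Tl a)"
      "adjacent_in D (Hd a) (Hd b) \<or> adjacent_in D (Hd b) (Hd a)"
      "D' = delete_arrows {a, b} D"
    using assms(1) unfolding R2_move_def by blast
  have "circ D (Tl a) = circ D (Tl b)" "circ D (Hd a) = circ D (Hd b)"
    using ab(5,6) adjacent_in_circ_eq assms(2) by metis+
  then have "arrows_from_to D j k \<inter> {a, b} \<in> {{}, {a, b}}"
    using ab(2,3) by (auto simp: arrows_from_to_def)
  then have "(\<Sum>x\<in>arrows_from_to D j k \<inter> {a, b}. snd D x) = 0"
    using ab(1,4) by auto
  then show ?thesis using forbidden_matrix_delete_arrows[of D j k "{a, b}"] ab(7) by simp
qed

lemma gd_step_length: "gd_step D D' \<Longrightarrow> length (fst D') = length (fst D)"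
  unfolding gd_step_def rot_move_def forbidden_move_def R1_move_def R2_move_def R3_move_def
    relabel_def delete_arrows_def by auto

lemma gd_step_forbidden_matrix:
  assumes "gd_step D D'" "j \<noteq> k"
  shows "forbidden_matrix D' j k = forbidden_matrix D j k"
proof -
  have "distinct (concat (fst D))"
    using assms(1) wf_gd_distinct unfolding gd_step_def by blast
  then show ?thesis
    using assms forbidden_matrix_rot_move forbidden_matrix_forbidden_move forbidden_matrix_R1_move
      forbidden_matrix_R2_move forbidden_matrix_R3_move
    unfolding gd_step_def by metis
qed

lemma gd_equiv_forbidden_matrix:
  assumes "gd_equiv D D'"
  shows "length (fst D') = length (fst D)"
    and "j \<noteq> k \<Longrightarrow> forbidden_matrix D' j k = forbidden_matrix D j k"
proof -
  have "length (fst D') = length (fst D) \<and>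
        (\<forall>j k. j \<noteq> k \<longrightarrow> forbidden_matrix D' j k = forbidden_matrix D j k)"
    using assms unfolding gd_equiv_def
  proof (induction rule: rtranclp_induct)
    case (step D1 D2)
    then have "gd_step D1 D2 \<or> gd_step D2 D1" by (simp add: symclp_def)
    then show ?case using step.IH gd_step_length gd_step_forbidden_matrix by metis
  qed simp
  then show "length (fst D') = length (fst D)"
    and "j \<noteq> k \<Longrightarrow> forbidden_matrix D' j k = forbidden_matrix D j k" by auto
qed

section \<open>Winding numbers around triangles\<close>

text \<open>The determinant of x and y as plane vectors: positive iff y points to the left of x.\<close>
definition wedge :: "complex \<Rightarrow> complex \<Rightarrow> real" where
  "wedge x y = Im (cnj x * y)"

lemma wedge_bound: "\<bar>wedge x y\<bar> \<le> cmod x * cmod y"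
  unfolding wedge_def by (metis abs_Im_le_cmod complex_mod_cnj norm_mult)

lemma wedge_diff_right: "wedge x (y - z) = wedge x y - wedge x z"
  and wedge_swap: "wedge y x = - wedge x y"
  by (simp_all add: wedge_def algebra_simps)

lemma wedge_mult_mult: "wedge (k * x) (k * y) = (cmod k)\<^sup>2 * wedge x y"
  unfolding wedge_def cmod_power2 by (simp add: algebra_simps power2_eq_square)

lemma wedge_mult_right_self: "wedge v (v * Z) = (cmod v)\<^sup>2 * Im Z"
  unfolding wedge_def cmod_power2 by (simp add: algebra_simps power2_eq_square)

lemma wedge_le_mult:
  assumes "cmod x \<le> X" "cmod y \<le> Y"
  shows "\<bar>wedge x y\<bar> \<le> X * Y"
proof -
  have "0 \<le> X" using assms(1) norm_ge_zero order_trans by blast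
  then show ?thesis using wedge_bound[of x y] mult_mono[OF assms _ norm_ge_zero] by linarith
qed

lemma not_in_segment_if_wedge_nonzero:
  assumes "wedge (b - a) (z - a) \<noteq> 0"
  shows "z \<notin> closed_segment a b"
proof
  assume "z \<in> closed_segment a b"
  then obtain u where "z - a = (b - a) * of_real u"
    unfolding closed_segment_def by (auto simp: scaleR_conv_of_real algebra_simps)
  then show False using assms wedge_mult_right_self[of "b - a" "of_real u"] by simp
qed

lemma winding_number_triangle:
  assumes "wedge (b - a) (z - a) > 0" "wedge (c - b) (z - b) > 0" "wedge (a - c) (z - c) > 0"
  shows "winding_number (linepath a b +++ linepath b c +++ linepath c a) z = 1"
proof -
  have znot: "z \<notin> closed_segment a b" "z \<notin> closed_segment b c" "z \<notin> closed_segment c a"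
    using assms not_in_segment_if_wedge_nonzero by (metis less_irrefl)+
  have "Im ((b - a) * cnj (b - z)) = wedge (b - a) (z - a)" for a b
    by (simp add: wedge_def algebra_simps)
  then have "0 < Im ((b - a) * cnj (b - z))" "0 < Im ((c - b) * cnj (c - z))"
    "0 < Im ((a - c) * cnj (a - z))"
    using assms by simp_all
  then have gt0: "0 < Re (winding_number (linepath a b +++ linepath b c +++ linepath c a) z)"
    using znot
    by (simp add: winding_number_linepath_pos_lt path_image_join winding_number_join_pos_combined)
  have lt2: "Re (winding_number (linepath a b +++ linepath b c +++ linepath c a) z) < 2"
    using winding_number_lt_half_linepath[of _ a b] winding_number_lt_half_linepath[of _ b c]
      winding_number_lt_half_linepath[of _ c a] znot
    by (fastforce simp add: winding_number_join path_image_join)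
  show ?thesis
    by (rule winding_number_eq_1) (simp_all add: path_image_join gt0 lt2 znot)
qed

lemma convex_wedge_halfplane: "convex {y. wedge d (y - a) \<ge> 0}"
  unfolding convex_alt
proof safe
  fix x y :: complex and u :: real
  assume h: "0 \<le> wedge d (x - a)" "0 \<le> wedge d (y - a)" "0 \<le> u" "u \<le> 1"
  have "wedge d ((1 - u) *\<^sub>R x + u *\<^sub>R y - a) = (1 - u) * wedge d (x - a) + u * wedge d (y - a)"
    by (simp add: wedge_def scaleR_conv_of_real algebra_simps)
  then show "0 \<le> wedge d ((1 - u) *\<^sub>R x + u *\<^sub>R y - a)"
    using h by simp
qed

lemma winding_number_chord_loop_split:
  assumes R: "path R" "pathstart R = b" "pathfinish R = a"
    and z: "z \<notin> path_image R" "z \<notin> closed_segment a b" "z \<notin> closed_segment a c"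
      "z \<notin> closed_segment c b"
  shows "winding_number (linepath a b +++ R) z
    = winding_number (linepath a b +++ linepath b c +++ linepath c a) z
      + winding_number (linepath a c +++ linepath c b +++ R) z"
proof -
  have "z \<notin> closed_segment b c" "z \<notin> closed_segment c a"
    using z closed_segment_commute by blast+
  moreover have "winding_number (linepath c a) z = - winding_number (linepath a c) z"
    "winding_number (linepath b c) z = - winding_number (linepath c b) z"
    using winding_number_reversepath[of "linepath a c" z] winding_number_reversepath[of "linepath c b" z] z
    by simp_all
  ultimately show ?thesis
    using z R by (simp add: winding_number_join path_image_join not_in_path_image_join)
qed

lemma winding_number_triangle_beyond_side:
  assumes "wedge (b - a) (z - a) < 0" "wedge (b - a) (c - a) > 0"
  shows "winding_number (linepath a b +++ linepath b c +++ linepath c a) z = 0"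
proof (rule winding_number_zero_outside)
  let ?H = "{y. wedge (b - a) (y - a) \<ge> 0}"
  show "convex ?H" by (rule convex_wedge_halfplane)
  show "z \<notin> ?H" using assms(1) by simp
  have "a \<in> ?H" "b \<in> ?H" "c \<in> ?H" using assms(2) by (auto simp: wedge_def algebra_simps)
  then have "closed_segment a b \<subseteq> ?H" "closed_segment b c \<subseteq> ?H" "closed_segment c a \<subseteq> ?H"
    using closed_segment_subset convex_wedge_halfplane by metis+
  then show "path_image (linepath a b +++ linepath b c +++ linepath c a) \<subseteq> ?H"
    by (simp add: path_image_join)
qed auto

text \<open>The loop through the chord splits into the triangle abc, which winds once around
  z1 and not around z2, and the loop a-c-b-R, which does not separate z1 from z2.\<close>
lemma winding_number_jump_across_chord:
  assumes R: "path R" "pathstart R = b" "pathfinish R = a"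
    and disj: "closed_segment z1 z2 \<inter> (path_image R \<union> closed_segment a c \<union> closed_segment c b) = {}"
    and z1: "wedge (b - a) (z1 - a) > 0" "wedge (c - b) (z1 - b) > 0" "wedge (a - c) (z1 - c) > 0"
    and z2: "wedge (b - a) (z2 - a) < 0" and c: "wedge (b - a) (c - a) > 0"
  shows "winding_number (linepath a b +++ R) z1 - winding_number (linepath a b +++ R) z2 = 1"
proof -
  let ?Q = "linepath a c +++ linepath c b +++ R"
  have "z1 \<notin> closed_segment a b" "z2 \<notin> closed_segment a b"
    using z1 z2 not_in_segment_if_wedge_nonzero by (metis less_irrefl)+
  then have split: "winding_number (linepath a b +++ R) z
      = winding_number (linepath a b +++ linepath b c +++ linepath c a) z + winding_number ?Q z"
    if "z \<in> {z1, z2}" for z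
    using that disj by (intro winding_number_chord_loop_split[OF R]) auto
  have "winding_number ?Q constant_on closed_segment z1 z2"
    using disj R by (intro winding_number_constant) (auto simp: path_image_join)
  then have "winding_number ?Q z1 = winding_number ?Q z2" unfolding constant_on_def by auto
  then show ?thesis
    using split winding_number_triangle[OF z1] winding_number_triangle_beyond_side[OF z2 c] by simp
qed

text \<open>The comparison triangle in normalised coordinates: the chord joins -1 + Ea to 1 + Eb,
  the apex is \<i>, and Z is a point near 0 off the real axis.\<close>
lemma wedge_estimates_chord:
  assumes "cmod Ea \<le> \<eta>" "cmod Eb \<le> \<eta>" "0 < \<eta>" "\<eta> \<le> 1/100" "cmod Z \<le> 1/10"
  shows "Im Z \<ge> 4 * \<eta> \<Longrightarrow> wedge ((1 + Eb) - (-1 + Ea)) (Z - (-1 + Ea)) > 0"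
    and "Im Z \<le> - 4 * \<eta> \<Longrightarrow> wedge ((1 + Eb) - (-1 + Ea)) (Z - (-1 + Ea)) < 0"
    and "wedge ((1 + Eb) - (-1 + Ea)) (\<i> - (-1 + Ea)) > 0"
proof -
  have Eab: "cmod (Eb - Ea) \<le> 2 * \<eta>" using norm_triangle_ineq4[of Eb Ea] assms by linarith
  moreover have "cmod (Z + 1 - Ea) \<le> 9/8"
    using norm_triangle_ineq4[of "Z + 1" Ea] norm_triangle_ineq[of Z 1] assms by simp
  ultimately have Z: "\<bar>wedge (Eb - Ea) (Z + 1 - Ea)\<bar> \<le> 2 * \<eta> * (9/8)"
    by (rule wedge_le_mult)
  have "cmod (\<i> + 1 - Ea) \<le> 3"
    using norm_triangle_ineq4[of "\<i> + 1" Ea] norm_triangle_ineq[of \<i> 1] assms by simp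
  with Eab have apex: "\<bar>wedge (Eb - Ea) (\<i> + 1 - Ea)\<bar> \<le> 2 * \<eta> * 3"
    by (rule wedge_le_mult)
  have ImEa: "\<bar>Im Ea\<bar> \<le> \<eta>" using abs_Im_le_cmod[of Ea] assms by linarith
  have "wedge ((1 + Eb) - (-1 + Ea)) (Z - (-1 + Ea)) = 2 * Im Z - 2 * Im Ea + wedge (Eb - Ea) (Z + 1 - Ea)"
    by (simp add: wedge_def algebra_simps)
  then show "Im Z \<ge> 4 * \<eta> \<Longrightarrow> wedge ((1 + Eb) - (-1 + Ea)) (Z - (-1 + Ea)) > 0"
    and "Im Z \<le> - 4 * \<eta> \<Longrightarrow> wedge ((1 + Eb) - (-1 + Ea)) (Z - (-1 + Ea)) < 0"
    using Z ImEa assms(3) by linarith+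
  have "wedge ((1 + Eb) - (-1 + Ea)) (\<i> - (-1 + Ea)) = 2 - 2 * Im Ea + wedge (Eb - Ea) (\<i> + 1 - Ea)"
    by (simp add: wedge_def algebra_simps)
  then show "wedge ((1 + Eb) - (-1 + Ea)) (\<i> - (-1 + Ea)) > 0" using apex ImEa assms by linarith
qed

lemma wedge_estimates_sides:
  assumes "cmod Ea \<le> 1/100" "cmod Eb \<le> 1/100" "cmod Z \<le> 1/10"
  shows "wedge (\<i> - (1 + Eb)) (Z - (1 + Eb)) > 0"
    and "wedge ((-1 + Ea) - \<i>) (Z - \<i>) > 0"
proof -
  have "cmod (\<i> - 1) \<le> 2" using norm_triangle_ineq4[of \<i> 1] by simp
  moreover have "cmod (Z - Eb) \<le> 1/8" using norm_triangle_ineq4[of Z Eb] assms by simp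
  ultimately have e1: "\<bar>wedge (\<i> - 1) (Z - Eb)\<bar> \<le> 2 * (1/8)" by (rule wedge_le_mult)
  have "cmod (Z - 1 - Eb) \<le> 2"
    using norm_triangle_ineq4[of "Z - 1" Eb] norm_triangle_ineq4[of Z 1] assms by simp
  with assms(2) have e2: "\<bar>wedge Eb (Z - 1 - Eb)\<bar> \<le> (1/100) * 2" by (rule wedge_le_mult)
  have "wedge (\<i> - (1 + Eb)) (Z - (1 + Eb)) = 1 + wedge (\<i> - 1) (Z - Eb) - wedge Eb (Z - 1 - Eb)"
    by (simp add: wedge_def algebra_simps)
  then show "wedge (\<i> - (1 + Eb)) (Z - (1 + Eb)) > 0" using e1 e2 by linarith
  have "cmod (-1 - \<i>) \<le> 2" using norm_triangle_ineq4[of "-1" \<i>] by simp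
  then have e3: "\<bar>wedge (-1 - \<i>) Z\<bar> \<le> 2 * (1/10)" using assms(3) by (rule wedge_le_mult)
  have "cmod (Z - \<i>) \<le> 2" using norm_triangle_ineq4[of Z \<i>] assms by simp
  with assms(1) have e4: "\<bar>wedge Ea (Z - \<i>)\<bar> \<le> (1/100) * 2" by (rule wedge_le_mult)
  have "wedge ((-1 + Ea) - \<i>) (Z - \<i>) = 1 + wedge (-1 - \<i>) Z + wedge Ea (Z - \<i>)"
    by (simp add: wedge_def algebra_simps)
  then show "wedge ((-1 + Ea) - \<i>) (Z - \<i>) > 0" using e3 e4 by linarith
qed

lemma norm_gt_on_triangle_sides:
  assumes "cmod E \<le> 1/100" "y \<in> closed_segment (-1 + E) \<i> \<union> closed_segment \<i> (1 + E)"
  shows "1/10 < cmod y"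
proof -
  obtain l :: real where l: "0 \<le> l" "l \<le> 1" and y_cases:
    "y = of_real (1 - l) * (-1 + E) + of_real l * \<i> \<or> y = of_real (1 - l) * \<i> + of_real l * (1 + E)"
    using assms(2) unfolding closed_segment_def by (auto simp: scaleR_conv_of_real)
  obtain w e where "y = w + e" "1/2 \<le> cmod w" "cmod e \<le> 1/100"
    using y_cases
  proof (elim disjE)
    assume y: "y = of_real (1 - l) * (-1 + E) + of_real l * \<i>"
    have "\<bar>Re (of_real l - 1 + of_real l * \<i>)\<bar> + \<bar>Im (of_real l - 1 + of_real l * \<i>)\<bar> = 1"
      using l by simp
    then have "1/2 \<le> cmod (of_real l - 1 + of_real l * \<i>)"
      using abs_Re_le_cmod[of "of_real l - 1 + of_real l * \<i>"]
        abs_Im_le_cmod[of "of_real l - 1 + of_real l * \<i>"] by linarith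
    moreover have "cmod (of_real (1 - l) * E) \<le> 1/100"
      using l assms(1) mult_mono[of "1 - l" 1 "cmod E" "1/100"] by (simp add: norm_mult del: of_real_diff)
    ultimately show ?thesis using that[of "of_real l - 1 + of_real l * \<i>" "of_real (1 - l) * E"] y
      by (simp add: algebra_simps)
  next
    assume y: "y = of_real (1 - l) * \<i> + of_real l * (1 + E)"
    have "\<bar>Re (of_real l + of_real (1 - l) * \<i>)\<bar> + \<bar>Im (of_real l + of_real (1 - l) * \<i>)\<bar> = 1"
      using l by simp
    then have "1/2 \<le> cmod (of_real l + of_real (1 - l) * \<i>)"
      using abs_Re_le_cmod[of "of_real l + of_real (1 - l) * \<i>"]
        abs_Im_le_cmod[of "of_real l + of_real (1 - l) * \<i>"] by linarith
    moreover have "cmod (of_real l * E) \<le> 1/100"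
      using l assms(1) mult_mono[of l 1 "cmod E" "1/100"] by (simp add: norm_mult)
    ultimately show ?thesis using that[of "of_real l + of_real (1 - l) * \<i>" "of_real l * E"] y
      by (simp add: algebra_simps)
  qed
  then show ?thesis using norm_diff_ineq[of w e] by auto
qed

section \<open>The jump of the winding number at a crossing\<close>

locale near_linear_loop =
  fixes h :: "real \<Rightarrow> complex" and v :: complex and \<delta> \<eta> :: real
  assumes path: "path h" and loop: "h 1 = h 0"
    and v: "v \<noteq> 0" and \<delta>: "0 < \<delta>" "\<delta> < 1/2" and \<eta>: "0 < \<eta>" "\<eta> \<le> 1/100"
    and near: "\<And>x. \<bar>x\<bar> \<le> \<delta> \<Longrightarrow>
      cmod (h (1/2 + x) - h (1/2) - of_real x * v) \<le> \<eta> * cmod v * \<bar>x\<bar>"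
    and far: "\<And>t. t \<in> {0..1} \<Longrightarrow> \<delta> \<le> \<bar>t - 1/2\<bar> \<Longrightarrow>
      \<delta> * cmod v / 2 \<le> cmod (h t - h (1/2))"
begin

text \<open>The chord from a to b replaces the arc of h over the window; c is the apex of a
  comparison triangle to the left of the chord, and rest is the remainder of the loop.\<close>
definition "p = h (1/2)"
definition "k = of_real \<delta> * v"
definition "a = h (1/2 - \<delta>)"
definition "b = h (1/2 + \<delta>)"
definition "c = p + k * \<i>"
definition "rest = subpath (1/2 + \<delta>) 1 h +++ subpath 0 (1/2 - \<delta>) h"

lemma norm_v_pos: "0 < cmod v"
  using v by simp

lemma norm_k: "cmod k = \<delta> * cmod v"
  using \<delta> by (simp add: k_def norm_mult)

lemma k_nonzero: "k \<noteq> 0"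
  using \<delta> v by (simp add: k_def)

lemma chord_endpoints:
  obtains Ea Eb where "a = p + k * (-1 + Ea)" "b = p + k * (1 + Eb)"
    and "cmod Ea \<le> \<eta>" "cmod Eb \<le> \<eta>"
proof
  have "cmod (k * E) \<le> \<eta> * cmod v * \<delta> \<Longrightarrow> cmod E \<le> \<eta>" for E
    using \<delta> norm_v_pos by (simp add: norm_mult norm_k mult.commute mult.left_commute)
  moreover have "a - p - of_real (-\<delta>) * v = k * ((a - p) / k + 1)"
    "b - p - of_real \<delta> * v = k * ((b - p) / k - 1)"
    using k_nonzero by (simp_all add: k_def field_simps)
  ultimately show "cmod ((a - p) / k + 1) \<le> \<eta>" "cmod ((b - p) / k - 1) \<le> \<eta>"
    using near[of "-\<delta>"] near[of \<delta>] \<delta> by (simp_all add: a_def b_def p_def)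
  show "a = p + k * (-1 + ((a - p) / k + 1))" "b = p + k * (1 + ((b - p) / k - 1))"
    using k_nonzero by simp_all
qed

lemma not_in_path_image:
  assumes "cmod (z - p) \<le> \<delta> * cmod v / 10" "4 * \<eta> * \<delta> * (cmod v)\<^sup>2 \<le> \<bar>wedge v (z - p)\<bar>"
  shows "z \<notin> path_image h"
proof
  assume "z \<in> path_image h"
  then obtain t where t: "t \<in> {0..1}" "z = h t" unfolding path_image_def by auto
  show False
  proof (cases "\<delta> \<le> \<bar>t - 1/2\<bar>")
    case True
    then show False
      using far[OF t(1)] assms(1) t(2) mult_pos_pos[OF \<delta>(1) norm_v_pos] by (simp add: p_def)
  next
    case False
    define e where "e = z - p - of_real (t - 1/2) * v"
    have "cmod e \<le> \<eta> * cmod v * \<bar>t - 1/2\<bar>"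
      using near[of "t - 1/2"] False by (simp add: e_def t(2) p_def)
    also have "\<dots> \<le> \<eta> * cmod v * \<delta>" using False \<eta> by (intro mult_left_mono) auto
    finally have "\<bar>wedge v e\<bar> \<le> cmod v * (\<eta> * cmod v * \<delta>)"
      by (intro wedge_le_mult) simp_all
    moreover have "wedge v (z - p) = wedge v e"
      using wedge_mult_right_self[of v "of_real (t - 1/2)"] by (simp add: e_def wedge_diff_right mult.commute)
    moreover have "cmod v * (\<eta> * cmod v * \<delta>) < 4 * \<eta> * \<delta> * (cmod v)\<^sup>2"
      using \<eta> \<delta> norm_v_pos by (simp add: power2_eq_square algebra_simps)
    ultimately show False using assms(2) by linarith
  qed
qed

lemma arc_near_chord:
  assumes x: "x \<in> {0..1}"
  shows "cmod (subpath (1/2 - \<delta>) (1/2 + \<delta>) h x - linepath a b x) \<le> 2 * \<eta> * \<delta> * cmod v"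
    and "\<bar>wedge v (linepath a b x - p)\<bar> \<le> \<eta> * \<delta> * (cmod v)\<^sup>2"
proof -
  obtain Ea Eb where ab: "a = p + k * (-1 + Ea)" "b = p + k * (1 + Eb)"
    and E: "cmod Ea \<le> \<eta>" "cmod Eb \<le> \<eta>"
    by (rule chord_endpoints)
  define X where "X = (2 * x - 1) * \<delta>"
  have "\<bar>2 * x - 1\<bar> * \<delta> \<le> 1 * \<delta>" using x \<delta> by (intro mult_right_mono) auto
  then have X: "\<bar>X\<bar> \<le> \<delta>" using \<delta> by (simp add: X_def abs_mult)
  define eh where "eh = h (1/2 + X) - p - of_real X * v"
  have "cmod eh \<le> \<eta> * cmod v * \<bar>X\<bar>" using near[OF X] by (simp add: eh_def p_def)
  also have "\<dots> \<le> \<eta> * cmod v * \<delta>" using X \<eta> by (intro mult_left_mono) auto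
  finally have eh: "cmod eh \<le> \<eta> * \<delta> * cmod v" by (simp add: algebra_simps)
  define eL where "eL = linepath a b x - p - of_real X * v"
  have "cmod (of_real (1 - x) * Ea + of_real x * Eb) \<le> (1 - x) * cmod Ea + x * cmod Eb"
    using x norm_triangle_ineq[of "of_real (1 - x) * Ea" "of_real x * Eb"]
    by (simp add: norm_mult del: of_real_diff)
  also have "\<dots> \<le> (1 - x) * \<eta> + x * \<eta>"
    using x E by (intro add_mono mult_left_mono) auto
  finally have "cmod (of_real (1 - x) * Ea + of_real x * Eb) \<le> \<eta>" by (simp add: algebra_simps)
  moreover have "eL = k * (of_real (1 - x) * Ea + of_real x * Eb)"
    by (simp add: eL_def linepath_def ab X_def k_def scaleR_conv_of_real algebra_simps)
  ultimately have eL: "cmod eL \<le> \<eta> * \<delta> * cmod v"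
    using \<delta> norm_v_pos by (simp add: norm_mult norm_k mult_left_mono)
  have "subpath (1/2 - \<delta>) (1/2 + \<delta>) h x - linepath a b x = eh - eL"
    by (simp add: subpath_def eh_def eL_def X_def algebra_simps)
  then show "cmod (subpath (1/2 - \<delta>) (1/2 + \<delta>) h x - linepath a b x) \<le> 2 * \<eta> * \<delta> * cmod v"
    using norm_triangle_ineq4[of eh eL] eh eL by simp
  have "wedge v (linepath a b x - p) = wedge v eL"
    using wedge_mult_right_self[of v "of_real X"] by (simp add: eL_def wedge_diff_right mult.commute)
  then show "\<bar>wedge v (linepath a b x - p)\<bar> \<le> \<eta> * \<delta> * (cmod v)\<^sup>2"
    using wedge_le_mult[OF order_refl eL] by (simp add: power2_eq_square algebra_simps)
qed

lemma winding_number_eq_chord_loop: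
  assumes z: "cmod (z - p) \<le> \<delta> * cmod v / 10" "4 * \<eta> * \<delta> * (cmod v)\<^sup>2 \<le> \<bar>wedge v (z - p)\<bar>"
  shows "z \<notin> closed_segment a b"
    and "winding_number h z = winding_number (linepath a b +++ rest) z"
proof -
  have znot: "z \<notin> path_image h" using not_in_path_image[OF z] .
  have chord_far: "3 * \<eta> * \<delta> * cmod v \<le> cmod (linepath a b x - z)" if x: "x \<in> {0..1}" for x
  proof -
    have "wedge v (linepath a b x - z) = wedge v (linepath a b x - p) - wedge v (z - p)"
      by (simp add: wedge_def algebra_simps)
    then have "3 * \<eta> * \<delta> * (cmod v)\<^sup>2 \<le> \<bar>wedge v (linepath a b x - z)\<bar>"
      using arc_near_chord(2)[OF x] z(2) by linarith
    also have "\<dots> \<le> cmod v * cmod (linepath a b x - z)" by (rule wedge_bound)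
    finally show ?thesis using norm_v_pos by (simp add: power2_eq_square algebra_simps)
  qed
  have pos: "0 < 3 * \<eta> * \<delta> * cmod v" using \<eta> \<delta> norm_v_pos by simp
  show "z \<notin> closed_segment a b"
    using chord_far pos unfolding path_image_linepath[symmetric] path_image_def by force
  have "winding_number (subpath (1/2 - \<delta>) (1/2 + \<delta>) h) z = winding_number (linepath a b) z"
  proof (rule winding_number_nearby_paths_eq)
    fix x :: real assume "x \<in> {0..1}"
    then show "cmod (subpath (1/2 - \<delta>) (1/2 + \<delta>) h x - linepath a b x) < cmod (linepath a b x - z)"
      using arc_near_chord(1) chord_far \<eta> \<delta> norm_v_pos
      by (smt (verit, best) mult_pos_pos mult_strict_right_mono)
  qed (use path \<delta> in \<open>auto simp: a_def b_def\<close>)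
  moreover have "z \<notin> path_image (subpath s t h)" if "s \<in> {0..1}" "t \<in> {0..1}" for s t
    using znot path_image_subpath_subset[OF that] by blast
  moreover have "winding_number h z = winding_number (subpath 0 (1/2 - \<delta>) h) z
      + winding_number (subpath (1/2 - \<delta>) (1/2 + \<delta>) h) z + winding_number (subpath (1/2 + \<delta>) 1 h) z"
    using winding_number_subpath_combine[OF path znot, of 0 "1/2 - \<delta>" "1/2 + \<delta>"]
      winding_number_subpath_combine[OF path znot, of 0 "1/2 + \<delta>" 1] \<delta>
    by simp
  ultimately show "winding_number h z = winding_number (linepath a b +++ rest) z"
    using path loop \<delta> \<open>z \<notin> closed_segment a b\<close>
    by (simp add: rest_def winding_number_join path_image_join a_def b_def)
qed

lemma rest_path: "path rest" "pathstart rest = b" "pathfinish rest = a"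
  using path loop \<delta> by (auto simp: rest_def a_def b_def)

lemma rest_far:
  assumes "y \<in> path_image rest"
  shows "\<delta> * cmod v / 2 \<le> cmod (y - p)"
proof -
  have "path_image rest = h ` {1/2 + \<delta>..1} \<union> h ` {0..1/2 - \<delta>}"
    using path loop \<delta> by (simp add: rest_def path_image_join path_image_subpath)
  then obtain t where "t \<in> {1/2 + \<delta>..1} \<union> {0..1/2 - \<delta>}" "y = h t" using assms by blast
  then show ?thesis using far[of t] \<delta> by (auto simp: p_def)
qed

lemma sides_far:
  assumes "y \<in> closed_segment a c \<union> closed_segment c b"
  shows "\<delta> * cmod v / 10 < cmod (y - p)"
proof -
  obtain Ea Eb where ab: "a = p + k * (-1 + Ea)" "b = p + k * (1 + Eb)"
    and E: "cmod Ea \<le> \<eta>" "cmod Eb \<le> \<eta>"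
    by (rule chord_endpoints)
  have "closed_segment (p + k * x) (p + k * y) = (\<lambda>w. p + k * w) ` closed_segment x y" for x y
    using closed_segment_linear_image[of "(*) k" x y] closed_segment_translation[of p "k * x" "k * y"]
    by (simp add: linear_times image_image)
  then have "(y - p) / k \<in> closed_segment (-1 + Ea) \<i> \<union> closed_segment \<i> (1 + Eb)"
    using assms k_nonzero by (auto simp: ab c_def)
  moreover have "(y - p) / k \<in> closed_segment (-1 + Ea) \<i> \<Longrightarrow> 1/10 < cmod ((y - p) / k)"
    "(y - p) / k \<in> closed_segment \<i> (1 + Eb) \<Longrightarrow> 1/10 < cmod ((y - p) / k)"
    using norm_gt_on_triangle_sides[of Ea] norm_gt_on_triangle_sides[of Eb] E \<eta> by auto
  ultimately have "1/10 < cmod (y - p) / (\<delta> * cmod v)" by (auto simp: norm_divide norm_k)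
  then show ?thesis using \<delta> norm_v_pos by (simp add: field_simps)
qed

lemma wedge_normalised: "wedge v (z - p) = \<delta> * (cmod v)\<^sup>2 * Im ((z - p) / k)"
proof -
  define w where "w = (z - p) / k"
  have "wedge v (z - p) = wedge v (v * (of_real \<delta> * w))"
    using k_nonzero by (simp add: w_def k_def)
  also have "\<dots> = (cmod v)\<^sup>2 * Im (of_real \<delta> * w)" by (rule wedge_mult_right_self)
  finally show ?thesis by (simp add: w_def[symmetric] mult.commute)
qed

lemma norm_normalised: "cmod ((z - p) / k) \<le> 1/10 \<longleftrightarrow> cmod (z - p) \<le> \<delta> * cmod v / 10"
  using \<delta> norm_v_pos by (simp add: norm_divide norm_k pos_divide_le_eq mult.commute)

lemma wedge_orientation:
  assumes z1: "cmod (z1 - p) \<le> \<delta> * cmod v / 10" "4 * \<eta> * \<delta> * (cmod v)\<^sup>2 \<le> wedge v (z1 - p)"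
    and z2: "cmod (z2 - p) \<le> \<delta> * cmod v / 10" "wedge v (z2 - p) \<le> - 4 * \<eta> * \<delta> * (cmod v)\<^sup>2"
  shows "wedge (b - a) (z1 - a) > 0" "wedge (c - b) (z1 - b) > 0" "wedge (a - c) (z1 - c) > 0"
    and "wedge (b - a) (z2 - a) < 0" "wedge (b - a) (c - a) > 0"
proof -
  obtain Ea Eb where ab: "a = p + k * (-1 + Ea)" "b = p + k * (1 + Eb)"
    and E: "cmod Ea \<le> \<eta>" "cmod Eb \<le> \<eta>"
    by (rule chord_endpoints)
  define Z1 Z2 where "Z1 = (z1 - p) / k" and "Z2 = (z2 - p) / k"
  have "\<delta> * (cmod v)\<^sup>2 * (4 * \<eta>) \<le> \<delta> * (cmod v)\<^sup>2 * Im Z1"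
    "\<delta> * (cmod v)\<^sup>2 * Im Z2 \<le> \<delta> * (cmod v)\<^sup>2 * (- 4 * \<eta>)"
    using z1(2) z2(2) unfolding wedge_normalised Z1_def Z2_def by (simp_all add: algebra_simps)
  moreover have "0 < \<delta> * (cmod v)\<^sup>2" using \<delta> norm_v_pos by simp
  ultimately have Im: "4 * \<eta> \<le> Im Z1" "Im Z2 \<le> - 4 * \<eta>"
    by (simp_all only: mult_le_cancel_left_pos)
  have Z: "cmod Z1 \<le> 1/10" "cmod Z2 \<le> 1/10"
    using z1(1) z2(1) unfolding Z1_def Z2_def norm_normalised .
  have E': "cmod Ea \<le> 1/100" "cmod Eb \<le> 1/100" using E \<eta> by linarith+
  have "z1 = p + k * Z1" "z2 = p + k * Z2" using k_nonzero by (simp_all add: Z1_def Z2_def)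
  then have "b - a = k * ((1 + Eb) - (-1 + Ea))" "c - b = k * (\<i> - (1 + Eb))"
    "a - c = k * ((-1 + Ea) - \<i>)" "c - a = k * (\<i> - (-1 + Ea))"
    "z1 - a = k * (Z1 - (-1 + Ea))" "z1 - b = k * (Z1 - (1 + Eb))" "z1 - c = k * (Z1 - \<i>)"
    "z2 - a = k * (Z2 - (-1 + Ea))"
    by (simp_all add: ab c_def algebra_simps)
  then show "wedge (b - a) (z1 - a) > 0" "wedge (c - b) (z1 - b) > 0" "wedge (a - c) (z1 - c) > 0"
    and "wedge (b - a) (z2 - a) < 0" "wedge (b - a) (c - a) > 0"
    using wedge_estimates_chord[OF E \<eta> Z(1)] wedge_estimates_chord[OF E \<eta> Z(2)]
      wedge_estimates_sides[OF E' Z(1)] Im k_nonzero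
    by (simp_all add: wedge_mult_mult zero_less_mult_iff mult_less_0_iff)
qed

lemma winding_number_jump:
  assumes z1: "cmod (z1 - p) \<le> \<delta> * cmod v / 10" "4 * \<eta> * \<delta> * (cmod v)\<^sup>2 \<le> wedge v (z1 - p)"
    and z2: "cmod (z2 - p) \<le> \<delta> * cmod v / 10" "wedge v (z2 - p) \<le> - 4 * \<eta> * \<delta> * (cmod v)\<^sup>2"
  shows "z1 \<notin> path_image h" "z2 \<notin> path_image h"
    and "winding_number h z1 - winding_number h z2 = 1"
proof -
  have off_line: "4 * \<eta> * \<delta> * (cmod v)\<^sup>2 \<le> \<bar>wedge v (z1 - p)\<bar>"
    "4 * \<eta> * \<delta> * (cmod v)\<^sup>2 \<le> \<bar>wedge v (z2 - p)\<bar>"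
    using z1(2) z2(2) by linarith+
  show "z1 \<notin> path_image h" "z2 \<notin> path_image h"
    using not_in_path_image z1(1) z2(1) off_line by auto
  have "closed_segment z1 z2 \<subseteq> cball p (\<delta> * cmod v / 10)"
    using z1(1) z2(1) by (intro closed_segment_subset) (auto simp: dist_norm norm_minus_commute)
  then have "cmod (y - p) \<le> \<delta> * cmod v / 10" if "y \<in> closed_segment z1 z2" for y
    using that by (auto simp: dist_norm norm_minus_commute)
  moreover have "0 < \<delta> * cmod v" using \<delta> norm_v_pos by simp
  ultimately have "closed_segment z1 z2 \<inter> (path_image rest \<union> closed_segment a c \<union> closed_segment c b) = {}"
    using rest_far sides_far by fastforce
  then show "winding_number h z1 - winding_number h z2 = 1"
    using winding_number_jump_across_chord[OF rest_path _ wedge_orientation[OF z1 z2]]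
      winding_number_eq_chord_loop(2)[OF z1(1) off_line(1)] winding_number_eq_chord_loop(2)[OF z2(1) off_line(2)]
    by simp
qed

end

lemma periodic_add_of_int:
  fixes f :: "real \<Rightarrow> 'a"
  assumes "\<And>t. f (t + 1) = f t"
  shows "f (t + of_int m) = f t"
proof (induction m arbitrary: t rule: int_induct[where k=0])
  case (step1 i)
  then show ?case using assms[of "t + of_int i"] by (simp add: add.assoc)
next
  case (step2 i)
  then show ?case using assms[of "t + of_int (i - 1)"] by (simp add: add.assoc)
qed simp

lemma periodic_frac:
  fixes f :: "real \<Rightarrow> 'a"
  assumes "\<And>t. f (t + 1) = f t"
  shows "f (frac t) = f t"
  using periodic_add_of_int[where f=f, OF assms, of "frac t" "\<lfloor>t\<rfloor>"] by (simp add: frac_def)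

lemma periodic_image_interval:
  fixes f :: "real \<Rightarrow> 'a"
  assumes "\<And>t. f (t + 1) = f t"
  shows "f ` {a..a + 1} = range f"
proof -
  have "f t \<in> f ` {a..a + 1}" for t
  proof
    show "f t = f (a + frac (t - a))"
      using periodic_add_of_int[where f=f, OF assms, of "a + frac (t - a)" "\<lfloor>t - a\<rfloor>"] by (simp add: frac_def)
    show "a + frac (t - a) \<in> {a..a + 1}" by (simp add: less_imp_le[OF frac_lt_1])
  qed
  then show ?thesis by auto
qed

lemma periodic_loop:
  fixes f :: "real \<Rightarrow> 'a::topological_space"
  assumes "\<And>t. f (t + 1) = f t" "continuous_on UNIV f"
  shows "path f" "pathfinish f = pathstart f" "path_image f = range f"
  using continuous_on_subset[OF assms(2) subset_UNIV] assms(1)[of 0]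
    periodic_image_interval[where f=f, OF assms(1), of 0]
  by (auto simp: path_def pathfinish_def pathstart_def path_image_def)

lemma periodic_shift:
  fixes f :: "real \<Rightarrow> 'a::topological_space"
  assumes "\<And>t. f (t + 1) = f t" "continuous_on UNIV f"
  shows "f (t + 1 + r) = f (t + r)" "continuous_on UNIV (\<lambda>t. f (t + r))"
    and "range (\<lambda>t. f (t + r)) = range f"
proof -
  show "f (t + 1 + r) = f (t + r)" using assms(1)[of "t + r"] by (simp add: algebra_simps)
  show "continuous_on UNIV (\<lambda>t. f (t + r))"
    by (intro continuous_on_compose2[OF assms(2)] continuous_intros) auto
  show "range (\<lambda>t. f (t + r)) = range f"
    by (auto simp: image_iff) (metis diff_add_cancel)
qed

lemma winding_number_periodic_shift:
  fixes f :: "real \<Rightarrow> complex"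
  assumes per: "\<And>t. f (t + 1) = f t" and "continuous_on UNIV f" and z: "z \<notin> range f"
  shows "winding_number (\<lambda>t. f (t + r)) z = winding_number f z"
proof -
  have "shiftpath (frac r) f = (\<lambda>t. f (t + r))"
  proof
    fix t
    have "f (frac r + t) = f (t + r)" and "f (frac r + t - 1) = f (frac r + t)"
      using periodic_add_of_int[where f=f, OF per, of "t + r" "- \<lfloor>r\<rfloor>"] per[of "frac r + t - 1"]
      by (simp_all add: frac_def algebra_simps)
    then show "shiftpath (frac r) f t = f (t + r)" by (simp add: shiftpath_def)
  qed
  moreover have "winding_number (shiftpath (frac r) f) z = winding_number f z"
    using periodic_loop[OF assms(1,2)] z
    by (intro winding_number_shiftpath) (auto simp: less_imp_le[OF frac_lt_1])
  ultimately show ?thesis by simp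
qed

lemma vector_derivative_linear_approx:
  assumes "(f has_vector_derivative f') (at s)" "0 < e"
  obtains d where "0 < d" "\<And>x. \<bar>x\<bar> \<le> d \<Longrightarrow> norm (f (s + x) - f s - x *\<^sub>R f') \<le> e * \<bar>x\<bar>"
proof -
  obtain d where d: "0 < d"
    "\<And>y. \<bar>y - s\<bar> < d \<Longrightarrow> norm (f y - f s - (y - s) *\<^sub>R f') \<le> e * \<bar>y - s\<bar>"
    using assms unfolding has_vector_derivative_def has_derivative_at_alt by fastforce
  show ?thesis
  proof (rule that[of "d / 2"])
    fix x :: real assume "\<bar>x\<bar> \<le> d / 2"
    then show "norm (f (s + x) - f s - x *\<^sub>R f') \<le> e * \<bar>x\<bar>" using d(1) d(2)[of "s + x"] by simp
  qed (use d in simp)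
qed

lemma periodic_simple_point_far:
  fixes f :: "real \<Rightarrow> 'a::real_normed_vector"
  assumes per: "\<And>t. f (t + 1) = f t" and cont: "continuous_on UNIV f"
    and simple: "\<And>t. f t = f t0 \<Longrightarrow> t - t0 \<in> \<int>" and d: "0 < d" "d \<le> 1/2"
  obtains r where "0 < r"
    "\<And>t. t \<in> {0..1} \<Longrightarrow> d \<le> \<bar>t - 1/2\<bar> \<Longrightarrow> r \<le> norm (f (t + (t0 - 1/2)) - f t0)"
proof -
  define K where "K = {0..1/2 - d} \<union> {1/2 + d..1::real}"
  have "compact K" "K \<noteq> {}" using d by (auto simp: K_def intro!: exI[of _ 0])
  moreover have "continuous_on K (\<lambda>t. norm (f (t + (t0 - 1/2)) - f t0))"
    by (intro continuous_intros continuous_on_compose2[OF cont]) auto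
  ultimately have "\<exists>t1\<in>K. \<forall>t\<in>K. norm (f (t1 + (t0 - 1/2)) - f t0) \<le> norm (f (t + (t0 - 1/2)) - f t0)"
    by (rule continuous_attains_inf)
  then obtain t1 where t1: "t1 \<in> K"
    "\<And>t. t \<in> K \<Longrightarrow> norm (f (t1 + (t0 - 1/2)) - f t0) \<le> norm (f (t + (t0 - 1/2)) - f t0)"
    by blast
  have "f (t1 + (t0 - 1/2)) \<noteq> f t0"
  proof
    assume "f (t1 + (t0 - 1/2)) = f t0"
    then have "t1 - 1/2 \<in> \<int>" using simple by fastforce
    moreover have "\<bar>t1 - 1/2\<bar> < 1" "t1 \<noteq> 1/2" using t1(1) d by (auto simp: K_def)
    ultimately show False using Ints_nonzero_abs_less1[of "t1 - 1/2"] by simp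
  qed
  moreover have "t \<in> K" if "t \<in> {0..1}" "d \<le> \<bar>t - 1/2\<bar>" for t
    using that by (auto simp: K_def abs_if split: if_splits)
  ultimately show ?thesis
    using t1 by (intro that[of "norm (f (t1 + (t0 - 1/2)) - f t0)"]) auto
qed

lemma norm_ge_half_if_linear_approx:
  fixes y v :: "'a::real_normed_vector"
  assumes "norm (y - x *\<^sub>R v) \<le> \<eta> * norm v * \<bar>x\<bar>" "\<eta> \<le> 1/2"
  shows "\<bar>x\<bar> * norm v / 2 \<le> norm y"
proof -
  have "\<bar>x\<bar> * norm v \<le> norm y + norm (y - x *\<^sub>R v)"
    using norm_triangle_ineq4[of y "y - x *\<^sub>R v"] by simp
  moreover have "\<eta> * norm v * \<bar>x\<bar> \<le> 1/2 * (\<bar>x\<bar> * norm v)"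
    using assms(2) mult_right_mono[OF assms(2), of "\<bar>x\<bar> * norm v"] by (simp add: algebra_simps)
  ultimately show ?thesis using assms(1) by linarith
qed

lemma near_linear_loop_at_simple_point:
  fixes f :: "real \<Rightarrow> complex"
  assumes per: "\<And>t. f (t + 1) = f t" and cont: "continuous_on UNIV f"
    and der: "(f has_vector_derivative v) (at t0)" and v: "v \<noteq> 0"
    and simple: "\<And>t. f t = f t0 \<Longrightarrow> t - t0 \<in> \<int>" and \<eta>: "0 < \<eta>" "\<eta> \<le> 1/100"
  obtains \<delta>0 where "0 < \<delta>0"
    "\<And>\<delta>. 0 < \<delta> \<Longrightarrow> \<delta> \<le> \<delta>0 \<Longrightarrow> near_linear_loop (\<lambda>t. f (t + (t0 - 1/2))) v \<delta> \<eta>"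
proof -
  obtain d where d: "0 < d" "\<And>x. \<bar>x\<bar> \<le> d \<Longrightarrow> cmod (f (t0 + x) - f t0 - x *\<^sub>R v) \<le> \<eta> * cmod v * \<bar>x\<bar>"
    using vector_derivative_linear_approx[OF der, of "\<eta> * cmod v"] \<eta> v by auto
  define d' where "d' = min d (1/4)"
  have d': "0 < d'" "d' \<le> 1/2" using d by (auto simp: d'_def)
  obtain r where r: "0 < r"
    "\<And>t. t \<in> {0..1} \<Longrightarrow> d' \<le> \<bar>t - 1/2\<bar> \<Longrightarrow> r \<le> cmod (f (t + (t0 - 1/2)) - f t0)"
    using periodic_simple_point_far[OF per cont simple d'] by blast
  show ?thesis
  proof (rule that[of "min d' (r / cmod v)"])
    show "0 < min d' (r / cmod v)" using d r v by (simp add: d'_def)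
    fix \<delta> assume \<delta>: "0 < \<delta>" "\<delta> \<le> min d' (r / cmod v)"
    let ?g = "\<lambda>t. f (t + (t0 - 1/2))"
    have near: "cmod (?g (1/2 + x) - ?g (1/2) - of_real x * v) \<le> \<eta> * cmod v * \<bar>x\<bar>" if "\<bar>x\<bar> \<le> d" for x
      using d(2)[OF that] by (simp add: scaleR_conv_of_real algebra_simps)
    have "\<delta> * cmod v / 2 \<le> cmod (?g t - ?g (1/2))" if t: "t \<in> {0..1}" "\<delta> \<le> \<bar>t - 1/2\<bar>" for t
    proof (cases "d' \<le> \<bar>t - 1/2\<bar>")
      case True
      moreover have "\<delta> * cmod v \<le> r" using \<delta> v by (simp add: le_divide_eq)
      ultimately show ?thesis using r(1) r(2)[OF t(1)] by simp
    next
      case False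
      then have "\<bar>t - 1/2\<bar> * cmod v / 2 \<le> cmod (?g t - ?g (1/2))"
        using near[of "t - 1/2"] \<eta> norm_ge_half_if_linear_approx[of "?g t - ?g (1/2)" "t - 1/2" v \<eta>]
        by (simp add: d'_def scaleR_conv_of_real algebra_simps)
      moreover have "\<delta> * cmod v \<le> \<bar>t - 1/2\<bar> * cmod v" using t(2) by (simp add: mult_right_mono)
      ultimately show ?thesis by simp
    qed
    then show "near_linear_loop ?g v \<delta> \<eta>"
      using periodic_loop[OF periodic_shift(1,2)[OF per cont]] per[of "t0 - 1/2"] near \<delta> \<eta> v
      by unfold_locales (auto simp: d'_def pathfinish_def pathstart_def)
  qed
qed

lemma transversal_crossing_points:
  fixes g :: "real \<Rightarrow> complex"
  assumes der: "(g has_vector_derivative w) (at s0)" and transversal: "wedge v w \<noteq> 0"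
  obtains e0 where "0 < e0" "\<And>\<epsilon> \<tau>. 0 < \<epsilon> \<Longrightarrow> \<epsilon> \<le> e0 \<Longrightarrow> \<bar>\<tau>\<bar> = 1 \<Longrightarrow>
      cmod (g (s0 + \<tau> * \<epsilon>) - g s0) \<le> 2 * cmod w * \<epsilon> \<and>
      \<bar>wedge v w\<bar> * \<epsilon> / 2 \<le> \<tau> * sgn (wedge v w) * wedge v (g (s0 + \<tau> * \<epsilon>) - g s0)"
proof -
  define C where "C = \<bar>wedge v w\<bar>"
  have "v \<noteq> 0" using transversal by (auto simp: wedge_def)
  then have nv: "0 < cmod v" by simp
  have C: "0 < C" "C \<le> cmod v * cmod w" using transversal wedge_bound[of v w] by (auto simp: C_def)
  obtain d where d: "0 < d"
    "\<And>x. \<bar>x\<bar> \<le> d \<Longrightarrow> cmod (g (s0 + x) - g s0 - x *\<^sub>R w) \<le> C / (2 * cmod v) * \<bar>x\<bar>"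
    using vector_derivative_linear_approx[OF der, of "C / (2 * cmod v)"] C nv by auto
  show ?thesis
  proof (rule that[OF d(1)], intro conjI)
    fix \<epsilon> \<tau> :: real assume \<epsilon>: "0 < \<epsilon>" "\<epsilon> \<le> d" and \<tau>: "\<bar>\<tau>\<bar> = 1"
    define err where "err = g (s0 + \<tau> * \<epsilon>) - g s0 - of_real (\<tau> * \<epsilon>) * w"
    have "cmod err \<le> C / (2 * cmod v) * \<epsilon>"
      using d(2)[of "\<tau> * \<epsilon>"] \<tau> \<epsilon> by (simp add: err_def abs_mult scaleR_conv_of_real)
    also have "\<dots> \<le> cmod w / 2 * \<epsilon>"
      using C nv \<epsilon> by (intro mult_right_mono) (auto simp: field_simps)
    finally have err: "cmod err \<le> cmod w / 2 * \<epsilon>" .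
    have "cmod (g (s0 + \<tau> * \<epsilon>) - g s0) \<le> cmod (of_real (\<tau> * \<epsilon>) * w) + cmod err"
      unfolding err_def by (rule norm_triangle_sub)
    moreover have "cmod (of_real (\<tau> * \<epsilon>) * w) = cmod w * \<epsilon>"
      using \<tau> \<epsilon> by (simp add: norm_mult abs_mult)
    moreover have "0 \<le> cmod w * \<epsilon>" using \<epsilon> by simp
    ultimately show "cmod (g (s0 + \<tau> * \<epsilon>) - g s0) \<le> 2 * cmod w * \<epsilon>"
      using err by linarith
    have "\<bar>wedge v err\<bar> \<le> cmod v * (C / (2 * cmod v) * \<epsilon>)"
      using \<open>cmod err \<le> C / (2 * cmod v) * \<epsilon>\<close> by (intro wedge_le_mult) auto
    moreover have "\<bar>\<tau> * sgn (wedge v w) * wedge v err\<bar> = \<bar>wedge v err\<bar>"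
      using \<tau> transversal by (simp add: abs_mult)
    ultimately have "\<bar>\<tau> * sgn (wedge v w) * wedge v err\<bar> \<le> C * \<epsilon> / 2" using nv by simp
    then have "- (\<tau> * sgn (wedge v w) * wedge v err) \<le> C * \<epsilon> / 2" by (rule abs_le_D2)
    moreover have "\<tau> * sgn (wedge v w) * wedge v (g (s0 + \<tau> * \<epsilon>) - g s0)
        = (\<tau> * \<tau>) * (sgn (wedge v w) * wedge v w) * \<epsilon> + \<tau> * sgn (wedge v w) * wedge v err"
      by (simp add: err_def wedge_def algebra_simps)
    moreover have "\<tau> * \<tau> = 1" using \<tau> by (auto simp: abs_if split: if_splits)
    moreover have "sgn (wedge v w) * wedge v w = C" by (simp add: C_def abs_sgn)
    ultimately have "C * \<epsilon> / 2 \<le> \<tau> * sgn (wedge v w) * wedge v (g (s0 + \<tau> * \<epsilon>) - g s0)"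
      by simp
    then show "\<bar>wedge v w\<bar> * \<epsilon> / 2 \<le> \<tau> * sgn (wedge v w) * wedge v (g (s0 + \<tau> * \<epsilon>) - g s0)"
      by (simp add: C_def)
  qed
qed

lemma winding_number_jump_periodic:
  fixes f :: "real \<Rightarrow> complex"
  assumes per: "\<And>t. f (t + 1) = f t" and cont: "continuous_on UNIV f"
    and "near_linear_loop (\<lambda>t. f (t + r)) v \<delta> \<eta>"
    and z1: "cmod (z1 - f (r + 1/2)) \<le> \<delta> * cmod v / 10"
      "4 * \<eta> * \<delta> * (cmod v)\<^sup>2 \<le> wedge v (z1 - f (r + 1/2))"
    and z2: "cmod (z2 - f (r + 1/2)) \<le> \<delta> * cmod v / 10"
      "wedge v (z2 - f (r + 1/2)) \<le> - 4 * \<eta> * \<delta> * (cmod v)\<^sup>2"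
  shows "z1 \<notin> range f" "z2 \<notin> range f" "winding_number f z1 - winding_number f z2 = 1"
proof -
  interpret near_linear_loop "\<lambda>t. f (t + r)" v \<delta> \<eta> by fact
  have "p = f (r + 1/2)" by (simp add: p_def add.commute)
  note jump = winding_number_jump[OF z1[folded this] z2[folded this]]
  have "path_image (\<lambda>t. f (t + r)) = range f"
    using periodic_loop(3)[OF periodic_shift(1,2)[OF per cont]] periodic_shift(3)[OF per cont] by simp
  with jump show "z1 \<notin> range f" "z2 \<notin> range f" by simp_all
  with jump show "winding_number f z1 - winding_number f z2 = 1"
    using winding_number_periodic_shift[OF per cont] by simp
qed

lemma winding_number_jump_at_crossing_oriented:
  fixes f g :: "real \<Rightarrow> complex"
  assumes per: "\<And>t. f (t + 1) = f t" and cont: "continuous_on UNIV f"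
    and fder: "(f has_vector_derivative v) (at t0)" and simple: "\<And>t. f t = f t0 \<Longrightarrow> t - t0 \<in> \<int>"
    and gder: "(g has_vector_derivative w) (at s0)" and cross: "g s0 = f t0"
    and transversal: "wedge v w \<noteq> 0" and e: "0 < e"
  obtains \<epsilon> where "0 < \<epsilon>" "\<epsilon> < e"
    "winding_number f (g (s0 + sgn (wedge v w) * \<epsilon>)) - winding_number f (g (s0 - sgn (wedge v w) * \<epsilon>)) = 1"
proof -
  define C where "C = \<bar>wedge v w\<bar>"
  define \<eta> where "\<eta> = C / (200 * cmod v * cmod w)"
  have "v \<noteq> 0" "w \<noteq> 0" using transversal by (auto simp: wedge_def)
  then have nv: "0 < cmod v" and nw: "0 < cmod w" by auto
  have C: "0 < C" "C \<le> cmod v * cmod w" using transversal wedge_bound[of v w] by (auto simp: C_def)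
  have \<eta>: "0 < \<eta>" "\<eta> \<le> 1/100" using C nv nw by (auto simp: \<eta>_def divide_le_eq)
  obtain \<delta>0 where \<delta>0: "0 < \<delta>0"
    "\<And>\<delta>. 0 < \<delta> \<Longrightarrow> \<delta> \<le> \<delta>0 \<Longrightarrow> near_linear_loop (\<lambda>t. f (t + (t0 - 1/2))) v \<delta> \<eta>"
    using near_linear_loop_at_simple_point[OF per cont fder \<open>v \<noteq> 0\<close> simple \<eta>] by blast
  obtain e0 where e0: "0 < e0" "\<And>\<epsilon> \<tau>. 0 < \<epsilon> \<Longrightarrow> \<epsilon> \<le> e0 \<Longrightarrow> \<bar>\<tau>\<bar> = 1 \<Longrightarrow>
      cmod (g (s0 + \<tau> * \<epsilon>) - g s0) \<le> 2 * cmod w * \<epsilon> \<and>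
      C * \<epsilon> / 2 \<le> \<tau> * sgn (wedge v w) * wedge v (g (s0 + \<tau> * \<epsilon>) - g s0)"
    using transversal_crossing_points[OF gder transversal] unfolding C_def by blast
  text \<open>With \<delta> = 20 |w| \<epsilon> / |v| the points g (s0 \<pm> \<epsilon>) lie within \<delta> |v| / 10 of the
    crossing, and by the choice of \<eta> their distance to the tangent line dominates 4 \<eta> \<delta> |v|.\<close>
  define \<epsilon> where "\<epsilon> = min (min e0 (e / 2)) (\<delta>0 * cmod v / (20 * cmod w))"
  define \<delta> where "\<delta> = 20 * cmod w * \<epsilon> / cmod v"
  have \<epsilon>: "0 < \<epsilon>" "\<epsilon> < e" "\<epsilon> \<le> e0" using e0 e \<delta>0 nv nw by (auto simp: \<epsilon>_def)
  have "\<epsilon> \<le> \<delta>0 * cmod v / (20 * cmod w)" by (simp add: \<epsilon>_def)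
  then have "0 < \<delta>" "\<delta> \<le> \<delta>0" using \<epsilon> nv nw by (simp_all add: \<delta>_def field_simps)
  note L = \<delta>0(2)[OF this]
  have scales: "2 * cmod w * \<epsilon> = \<delta> * cmod v / 10" "4 * \<eta> * \<delta> * (cmod v)\<^sup>2 \<le> C * \<epsilon> / 2"
    using nv nw \<epsilon> C by (simp_all add: \<delta>_def \<eta>_def power2_eq_square field_simps)
  define \<sigma> where "\<sigma> = sgn (wedge v w)"
  have \<sigma>: "\<bar>\<sigma>\<bar> = 1" "\<bar>- \<sigma>\<bar> = 1" "\<sigma> * \<sigma> = 1" using transversal by (auto simp: \<sigma>_def sgn_if)
  have p: "g s0 = f (t0 - 1/2 + 1/2)" by (simp add: cross)
  note pt = e0(2)[OF \<epsilon>(1,3), unfolded p scales(1), folded \<sigma>_def]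
  have "cmod (g (s0 + \<sigma> * \<epsilon>) - f (t0 - 1/2 + 1/2)) \<le> \<delta> * cmod v / 10"
    "4 * \<eta> * \<delta> * (cmod v)\<^sup>2 \<le> wedge v (g (s0 + \<sigma> * \<epsilon>) - f (t0 - 1/2 + 1/2))"
    "cmod (g (s0 - \<sigma> * \<epsilon>) - f (t0 - 1/2 + 1/2)) \<le> \<delta> * cmod v / 10"
    "wedge v (g (s0 - \<sigma> * \<epsilon>) - f (t0 - 1/2 + 1/2)) \<le> - 4 * \<eta> * \<delta> * (cmod v)\<^sup>2"
    using pt[OF \<sigma>(1)] pt[OF \<sigma>(2)] \<sigma>(3) scales(2) by auto
  from winding_number_jump_periodic(3)[OF per cont L this] show ?thesis
    using that[OF \<epsilon>(1,2)] by (simp add: \<sigma>_def)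
qed

lemma winding_number_jump_at_crossing:
  fixes f g :: "real \<Rightarrow> complex"
  assumes per: "\<And>t. f (t + 1) = f t" and cont: "continuous_on UNIV f"
    and fder: "(f has_vector_derivative v) (at t0)" and simple: "\<And>t. f t = f t0 \<Longrightarrow> t - t0 \<in> \<int>"
    and gder: "(g has_vector_derivative w) (at s0)" and cross: "g s0 = f t0"
    and transversal: "wedge v w \<noteq> 0" and e: "0 < e"
  obtains \<epsilon> where "0 < \<epsilon>" "\<epsilon> < e"
    "winding_number f (g (s0 + \<epsilon>)) - winding_number f (g (s0 - \<epsilon>)) = sgn (wedge v w)"
proof -
  obtain \<epsilon> where \<epsilon>: "0 < \<epsilon>" "\<epsilon> < e"
    "winding_number f (g (s0 + sgn (wedge v w) * \<epsilon>)) - winding_number f (g (s0 - sgn (wedge v w) * \<epsilon>)) = 1"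
    by (rule winding_number_jump_at_crossing_oriented[OF assms])
  consider "sgn (wedge v w) = 1" | "sgn (wedge v w) = -1"
    using transversal by (cases "0 < wedge v w") (auto simp: sgn_if)
  then show ?thesis
  proof cases
    case 1
    then show ?thesis using \<epsilon> that[OF \<epsilon>(1,2)] by simp
  next
    case 2
    then have "winding_number f (g (s0 + \<epsilon>)) - winding_number f (g (s0 - \<epsilon>)) = - 1"
      using \<epsilon>(3) by (simp add: algebra_simps)
    then show ?thesis using 2 that[OF \<epsilon>(1,2)] by simp
  qed
qed

section \<open>Summing the jumps over a period\<close>

lemma gap_after_Min:
  fixes S :: "real set"
  assumes "finite S" "S \<noteq> {}" "S \<subseteq> {a<..<b}"
  obtains d where "0 < d" "a < Min S - d" "Min S + d < b" "\<And>s. s \<in> S - {Min S} \<Longrightarrow> Min S + d < s"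
proof -
  define D where "D = {Min S - a, b - Min S} \<union> (\<lambda>s. s - Min S) ` (S - {Min S})"
  have "finite D" "D \<noteq> {}" using assms(1) by (auto simp: D_def)
  moreover have "a < Min S" "Min S < b" using Min_in[OF assms(1,2)] assms(3) by auto
  then have "\<And>x. x \<in> D \<Longrightarrow> 0 < x"
    using Min_le[OF assms(1)] by (force simp: D_def less_le)
  ultimately have "0 < Min D" "\<And>x. x \<in> D \<Longrightarrow> Min D \<le> x" using Min_in[of D] by auto
  then have "0 < Min D / 2" "\<And>x. x \<in> D \<Longrightarrow> Min D / 2 < x" by force+
  moreover have "Min S - a \<in> D" "b - Min S \<in> D" "\<And>s. s \<in> S - {Min S} \<Longrightarrow> s - Min S \<in> D"
    unfolding D_def by auto
  ultimately show ?thesis by (intro that[of "Min D / 2"]) force+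
qed

lemma sum_of_jumps:
  fixes F J :: "real \<Rightarrow> 'a::ab_group_add"
  assumes const: "\<And>a b. a \<le> b \<Longrightarrow> \<forall>s\<in>{a..b}. \<not> P s \<Longrightarrow> F a = F b"
    and fin: "\<And>a b. finite {s\<in>{a..b}. P s}"
    and jump: "\<And>s e. P s \<Longrightarrow> 0 < e \<Longrightarrow> \<exists>\<epsilon>. 0 < \<epsilon> \<and> \<epsilon> < e \<and> F (s + \<epsilon>) - F (s - \<epsilon>) = J s"
  shows "a \<le> b \<Longrightarrow> \<not> P a \<Longrightarrow> \<not> P b \<Longrightarrow> F b - F a = (\<Sum>s\<in>{s\<in>{a..b}. P s}. J s)"
proof (induction "card {s\<in>{a..b}. P s}" arbitrary: a rule: less_induct)
  case less
  define S where "S = {s\<in>{a..b}. P s}"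
  show ?case
  proof (cases "S = {}")
    case True
    moreover have "F a = F b" using True const[OF less.prems(1)] by (auto simp: S_def)
    ultimately show ?thesis unfolding S_def[symmetric] by simp
  next
    case False
    define s0 where "s0 = Min S"
    have "finite S" "S \<subseteq> {a<..<b}" using fin less.prems by (auto simp: S_def order_le_less)
    then obtain d where d: "0 < d" "a < s0 - d" "s0 + d < b" "\<And>s. s \<in> S - {s0} \<Longrightarrow> s0 + d < s"
      using gap_after_Min False unfolding s0_def by blast
    have s0: "s0 \<in> S" "\<And>s. s \<in> S \<Longrightarrow> s0 \<le> s" using \<open>finite S\<close> False by (simp_all add: s0_def)
    then obtain \<epsilon> where \<epsilon>: "0 < \<epsilon>" "\<epsilon> < d" "F (s0 + \<epsilon>) - F (s0 - \<epsilon>) = J s0"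
      using jump[OF _ d(1), of s0] by (auto simp: S_def)
    have "\<not> P s" if "s \<in> {a..s0 - \<epsilon>}" for s
      using that s0 \<epsilon> by (fastforce simp: S_def)
    then have left: "F a = F (s0 - \<epsilon>)" using const[of a "s0 - \<epsilon>"] d(2) \<epsilon> by simp
    have S': "{s\<in>{s0 + \<epsilon>..b}. P s} = S - {s0}"
      using d(3,4) s0 \<epsilon> by (force simp: S_def)
    have "\<not> P (s0 + \<epsilon>)"
    proof
      assume "P (s0 + \<epsilon>)"
      then have "s0 + \<epsilon> \<in> S - {s0}" using d(2,3) \<epsilon> by (simp add: S_def)
      then show False using d(4) \<epsilon>(2) by fastforce
    qed
    moreover have "card {s\<in>{s0 + \<epsilon>..b}. P s} < card {s\<in>{a..b}. P s}"
      unfolding S' S_def[symmetric] using \<open>finite S\<close> s0(1) by (rule card_Diff1_less)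
    ultimately have right: "F b - F (s0 + \<epsilon>) = (\<Sum>s\<in>S - {s0}. J s)"
      using less.hyps[of "s0 + \<epsilon>"] less.prems(3) d(3) \<epsilon> S' by simp
    show ?thesis
      using left right \<epsilon>(3) sum.remove[OF \<open>finite S\<close> s0(1), of J]
      unfolding S_def[symmetric] by (simp add: algebra_simps)
  qed
qed

lemma periodic_vector_derivative:
  fixes f f' :: "real \<Rightarrow> 'a::real_normed_vector"
  assumes per: "\<And>t. f (t + 1) = f t" and der: "\<And>t. (f has_vector_derivative f' t) (at t)"
  shows "f' (t + 1) = f' t"
proof -
  have "((\<lambda>x. x + 1) has_vector_derivative 1 + 0) (at t)"
    by (intro has_vector_derivative_add has_vector_derivative_const has_vector_derivative_id)
  then have "((\<lambda>x. f (x + 1)) has_vector_derivative f' (t + 1)) (at t)"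
    using vector_diff_chain_at[of "\<lambda>x. x + 1" 1 t f "f' (t + 1)"] der by (simp add: o_def)
  then show ?thesis using per vector_derivative_unique_at[OF der[of t]] by simp
qed

lemma winding_number_constant_along:
  fixes f g :: "real \<Rightarrow> complex"
  assumes "path f" "pathfinish f = pathstart f" "continuous_on {a..b} g" "a \<le> b"
    and "\<forall>s\<in>{a..b}. g s \<notin> path_image f"
  shows "winding_number f (g a) = winding_number f (g b)"
proof -
  have "winding_number f constant_on g ` {a..b}"
    using assms by (intro winding_number_constant connected_continuous_image) auto
  then show ?thesis using assms(4) unfolding constant_on_def by auto
qed

lemma finite_frac_preimage:
  assumes "finite X"
  shows "finite {s\<in>{a..b}. frac s \<in> X}"
proof (rule finite_subset)
  show "{s\<in>{a..b}. frac s \<in> X} \<subseteq> (\<lambda>(x, m). x + of_int m) ` (X \<times> {\<lfloor>a\<rfloor>..\<lfloor>b\<rfloor>})"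
  proof
    fix s assume "s \<in> {s\<in>{a..b}. frac s \<in> X}"
    then have "(frac s, \<lfloor>s\<rfloor>) \<in> X \<times> {\<lfloor>a\<rfloor>..\<lfloor>b\<rfloor>}" by (auto intro: floor_mono)
    then show "s \<in> (\<lambda>(x, m). x + of_int m) ` (X \<times> {\<lfloor>a\<rfloor>..\<lfloor>b\<rfloor>})"
      by (force simp: frac_def)
  qed
qed (use assms in simp)

lemma frac_window:
  fixes X :: "real set"
  assumes "finite X" "X \<subseteq> {0..<1}"
  obtains \<eta> where "0 < \<eta>" "frac (- \<eta>) \<notin> X" "frac (1 - \<eta>) \<notin> X"
    "{s\<in>{- \<eta>..1 - \<eta>}. frac s \<in> X} = X"
proof -
  define M where "M = Max (insert 0 X)"
  have M: "0 \<le> M" "M < 1" "\<And>x. x \<in> X \<Longrightarrow> x \<le> M"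
    using assms by (auto simp: M_def)
  define \<eta> where "\<eta> = (1 - M) / 2"
  have \<eta>: "0 < \<eta>" "\<eta> < 1" "M < 1 - \<eta>" using M by (auto simp: \<eta>_def field_simps)
  have frac_neg: "frac s = s + 1" if "s < 0" "- \<eta> \<le> s" for s
    using that \<eta> by (simp add: frac_unique_iff)
  have frac_pos: "frac s = s" if "0 \<le> s" "s < 1" for s
    using that by (simp add: frac_eq)
  show ?thesis
  proof
    show "0 < \<eta>" by (rule \<eta>(1))
    show "frac (- \<eta>) \<notin> X" "frac (1 - \<eta>) \<notin> X"
      using frac_neg[of "- \<eta>"] frac_pos[of "1 - \<eta>"] M(3) \<eta> by force+
    have sub: "s \<in> X" if "s \<in> {- \<eta>..1 - \<eta>}" "frac s \<in> X" for s
    proof (cases "s < 0")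
      case True
      then show ?thesis using that frac_neg[of s] M(3)[of "frac s"] \<eta> by auto
    next
      case False
      then show ?thesis using that frac_pos[of s] \<eta> by auto
    qed
    have sup: "x \<in> {- \<eta>..1 - \<eta>} \<and> frac x \<in> X" if "x \<in> X" for x
      using that assms(2) M(3)[OF that] \<eta> frac_pos[of x] by auto
    show "{s\<in>{- \<eta>..1 - \<eta>}. frac s \<in> X} = X"
      using sub sup by blast
  qed
qed

locale crossing_loops =
  fixes f g f' g' :: "real \<Rightarrow> complex" and C :: "(real \<times> real) set"
  assumes fper: "\<And>t. f (t + 1) = f t" and gper: "\<And>s. g (s + 1) = g s"
    and fder: "\<And>t. (f has_vector_derivative f' t) (at t)"
    and gder: "\<And>s. (g has_vector_derivative g' s) (at s)"
    and finite_crossings: "finite C" and crossings_range: "C \<subseteq> {0..<1} \<times> {0..<1}"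
    and crossings: "\<And>s t. s \<in> {0..<1} \<Longrightarrow> t \<in> {0..<1} \<Longrightarrow> g s = f t \<longleftrightarrow> (s, t) \<in> C"
    and simple: "\<And>s t t'. (s, t) \<in> C \<Longrightarrow> (s, t') \<in> C \<Longrightarrow> t = t'"
    and transversal: "\<And>s t. (s, t) \<in> C \<Longrightarrow> wedge (f' t) (g' s) \<noteq> 0"
begin

definition "crossing_params = fst ` C"

definition "partner s = (THE t. (s, t) \<in> C)"

lemma partner_eq: "(s, t) \<in> C \<Longrightarrow> partner s = t"
  unfolding partner_def using simple by blast

lemma crossing_params: "finite crossing_params" "crossing_params \<subseteq> {0..<1}"
  using finite_crossings crossings_range by (auto simp: crossing_params_def)

lemma crossing_params_partner: "s \<in> crossing_params \<Longrightarrow> (s, partner s) \<in> C"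
  using partner_eq by (force simp: crossing_params_def)

lemma continuous_loops: "continuous_on UNIV f" "continuous_on UNIV g"
  using fder gder by (meson continuous_at_imp_continuous_on has_vector_derivative_continuous)+

lemma in_range_iff_frac: "g s \<in> range f \<longleftrightarrow> frac s \<in> crossing_params"
proof
  assume "g s \<in> range f"
  then obtain t where "g s = f t" by auto
  then have "g (frac s) = f (frac t)" using periodic_frac[of g, OF gper] periodic_frac[of f, OF fper] by simp
  then show "frac s \<in> crossing_params"
    using crossings[of "frac s" "frac t"] by (force simp: crossing_params_def frac_lt_1)
next
  assume "frac s \<in> crossing_params"
  then have "g (frac s) = f (partner (frac s))"
    using crossings crossing_params_partner crossings_range by blast
  then show "g s \<in> range f" using periodic_frac[of g, OF gper] by (metis rangeI)
qed

lemma winding_number_jump_at_param: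
  assumes "frac s0 \<in> crossing_params" "0 < e"
  shows "\<exists>\<epsilon>. 0 < \<epsilon> \<and> \<epsilon> < e \<and> winding_number f (g (s0 + \<epsilon>)) - winding_number f (g (s0 - \<epsilon>))
    = sgn (wedge (f' (partner (frac s0))) (g' s0))"
proof -
  define t0 where "t0 = partner (frac s0)"
  have C0: "(frac s0, t0) \<in> C" using crossing_params_partner assms(1) by (simp add: t0_def)
  then have "g (frac s0) = f t0" using crossings crossings_range by blast
  then have "g s0 = f t0" using periodic_frac[of g, OF gper] by simp
  moreover have "t - t0 \<in> \<int>" if "f t = f t0" for t
  proof -
    have "(frac s0, frac t) \<in> C"
      using that \<open>g s0 = f t0\<close> crossings[of "frac s0" "frac t"] periodic_frac[of f, OF fper]
        periodic_frac[of g, OF gper] by (simp add: frac_lt_1)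
    then show ?thesis using simple[OF C0] by (simp add: frac_def)
  qed
  moreover have "g' s0 = g' (frac s0)"
    using periodic_frac[of g', OF periodic_vector_derivative[OF gper gder]] by simp
  ultimately show ?thesis
    using winding_number_jump_at_crossing[OF fper continuous_loops(1) fder, of t0 g "g' s0" s0]
      gder transversal[OF C0] assms(2)
    by (metis t0_def)
qed

theorem crossing_signs_sum_zero: "(\<Sum>(s, t)\<in>C. sgn (wedge (f' t) (g' s))) = 0"
proof -
  define F where "F s = winding_number f (g s)" for s
  define J where "J s = complex_of_real (sgn (wedge (f' (partner (frac s))) (g' s)))" for s
  have const: "F a = F b" if "a \<le> b" "\<forall>s\<in>{a..b}. \<not> frac s \<in> crossing_params" for a b
    unfolding F_def using that in_range_iff_frac periodic_loop[OF fper continuous_loops(1)]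
      continuous_loops(2)
    by (intro winding_number_constant_along) (auto intro: continuous_on_subset)
  obtain \<eta> where \<eta>: "0 < \<eta>" "frac (- \<eta>) \<notin> crossing_params" "frac (1 - \<eta>) \<notin> crossing_params"
    "{s\<in>{- \<eta>..1 - \<eta>}. frac s \<in> crossing_params} = crossing_params"
    using frac_window[OF crossing_params] by blast
  have "F (1 - \<eta>) - F (- \<eta>) = (\<Sum>s\<in>{s\<in>{- \<eta>..1 - \<eta>}. frac s \<in> crossing_params}. J s)"
    using \<eta> finite_frac_preimage[OF crossing_params(1)] winding_number_jump_at_param
    by (intro sum_of_jumps[where P="\<lambda>s. frac s \<in> crossing_params"] const)
      (auto simp: F_def J_def)
  moreover have "F (1 - \<eta>) = F (- \<eta>)" using gper[of "- \<eta>"] by (simp add: F_def)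
  moreover have "frac s = s" if "s \<in> crossing_params" for s
    using that crossing_params(2) by (auto simp: frac_eq)
  ultimately have sum_params: "(\<Sum>s\<in>crossing_params. sgn (wedge (f' (partner s)) (g' s))) = 0"
    using \<eta>(4) by (simp add: J_def flip: of_real_sum)
  have "C = (\<lambda>s. (s, partner s)) ` crossing_params"
    using partner_eq by (force simp: crossing_params_def)
  then have "(\<Sum>(s, t)\<in>C. sgn (wedge (f' t) (g' s)))
      = (\<Sum>(s, t)\<in>(\<lambda>s. (s, partner s)) ` crossing_params. sgn (wedge (f' t) (g' s)))"
    by (metis (no_types))
  also have "\<dots> = (\<Sum>s\<in>crossing_params. sgn (wedge (f' (partner s)) (g' s)))"
    by (simp add: sum.reindex inj_on_def)
  finally show ?thesis using sum_params by simp
qed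

end

section \<open>Planar diagrams\<close>

locale planar_realization =
  fixes D :: gd and \<gamma> \<gamma>' :: "nat \<Rightarrow> real \<Rightarrow> complex" and pos :: "endpt \<Rightarrow> real"
  assumes wf: "wf_gd D"
    and derivative: "\<And>j t. j < length (fst D) \<Longrightarrow> (\<gamma> j has_vector_derivative \<gamma>' j t) (at t)"
    and periodic: "\<And>j t. j < length (fst D) \<Longrightarrow> \<gamma> j (t + 1) = \<gamma> j t"
    and sorted: "\<And>j. j < length (fst D) \<Longrightarrow> sorted_wrt (<) (map pos (fst D ! j))"
    and pos_range: "\<And>j e. j < length (fst D) \<Longrightarrow> e \<in> set (fst D ! j) \<Longrightarrow> pos e \<in> {0..<1}"
    and arrow_crossing: "\<And>a. a \<in> gd_arrows D \<Longrightarrow>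
      \<gamma> (circ D (Tl a)) (pos (Tl a)) = \<gamma> (circ D (Hd a)) (pos (Hd a))"
    and arrow_sign: "\<And>a. a \<in> gd_arrows D \<Longrightarrow>
      of_int (snd D a) = sgn (wedge (\<gamma>' (circ D (Tl a)) (pos (Tl a))) (\<gamma>' (circ D (Hd a)) (pos (Hd a))))"
    and double_points: "\<And>j k s t. j < length (fst D) \<Longrightarrow> k < length (fst D) \<Longrightarrow>
      s \<in> {0..<1} \<Longrightarrow> t \<in> {0..<1} \<Longrightarrow> \<gamma> j s = \<gamma> k t \<Longrightarrow> (j, s) \<noteq> (k, t) \<Longrightarrow>
      \<exists>a\<in>gd_arrows D.
        ((j, s) = (circ D (Tl a), pos (Tl a)) \<and> (k, t) = (circ D (Hd a), pos (Hd a))) \<or>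
        ((k, t) = (circ D (Tl a), pos (Tl a)) \<and> (j, s) = (circ D (Hd a), pos (Hd a)))"

lemma planar_gd_realization:
  assumes "planar_gd D"
  obtains \<gamma> \<gamma>' pos where "planar_realization D \<gamma> \<gamma>' pos"
proof -
  obtain \<gamma> \<gamma>' pos where
    curves: "\<forall>j < length (fst D).
      (\<forall>t. (\<gamma> j has_vector_derivative \<gamma>' j t) (at t) \<and> \<gamma>' j t \<noteq> 0 \<and> \<gamma> j (t + 1) = \<gamma> j t) \<and>
      continuous_on UNIV (\<gamma>' j) \<and> sorted_wrt (<) (map pos (fst D ! j)) \<and>
      (\<forall>e\<in>set (fst D ! j). 0 \<le> pos e \<and> pos e < 1)"
    and arrows: "\<forall>a\<in>gd_arrows D. \<gamma> (circ D (Tl a)) (pos (Tl a)) = \<gamma> (circ D (Hd a)) (pos (Hd a)) \<and>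
      of_int (snd D a) =
        sgn (Im (cnj (\<gamma>' (circ D (Tl a)) (pos (Tl a))) * \<gamma>' (circ D (Hd a)) (pos (Hd a))))"
    and double: "\<forall>j < length (fst D). \<forall>k < length (fst D). \<forall>s\<in>{0..<1}. \<forall>t\<in>{0..<1}.
      \<gamma> j s = \<gamma> k t \<and> (j, s) \<noteq> (k, t) \<longrightarrow>
      (\<exists>a\<in>gd_arrows D.
        ((j, s) = (circ D (Tl a), pos (Tl a)) \<and> (k, t) = (circ D (Hd a), pos (Hd a))) \<or>
        ((k, t) = (circ D (Tl a), pos (Tl a)) \<and> (j, s) = (circ D (Hd a), pos (Hd a))))"
    using assms unfolding planar_gd_def by blast
  have "wf_gd D" using assms by (simp add: planar_gd_def)
  show ?thesis
    by (rule that[of \<gamma> \<gamma>' pos], unfold_locales)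
      (use \<open>wf_gd D\<close> curves arrows double in \<open>simp_all add: wedge_def\<close>)
qed

context planar_realization
begin

lemma endpoint_eqI:
  assumes "a \<in> gd_arrows D" "b \<in> gd_arrows D" "e \<in> {Tl a, Hd a}" "e' \<in> {Tl b, Hd b}"
    and "circ D e = circ D e'" "pos e = pos e'"
  shows "e = e'"
proof -
  note on_circle = wf_gd_endpoint_circle[OF wf]
  have "distinct (map pos (fst D ! circ D e))"
    using sorted[OF on_circle(1)[OF assms(1,3)]] by (simp add: strict_sorted_iff)
  then show ?thesis
    using on_circle[OF assms(1,3)] on_circle[OF assms(2,4)] assms(5,6)
    by (metis distinct_map inj_onD)
qed

lemma pos_range_arrow:
  assumes "a \<in> gd_arrows D" "e \<in> {Tl a, Hd a}"
  shows "pos e \<in> {0..<1}"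
  using pos_range wf_gd_endpoint_circle[OF wf assms] by blast

definition crossing_pairs :: "nat \<Rightarrow> nat \<Rightarrow> (real \<times> real) set" where
  "crossing_pairs j k = (\<lambda>a. (pos (Tl a), pos (Hd a))) ` arrows_from_to D j k
    \<union> (\<lambda>a. (pos (Hd a), pos (Tl a))) ` arrows_from_to D k j"

lemma crossing_pairs_subset: "crossing_pairs j k \<subseteq> {0..<1} \<times> {0..<1}"
  using pos_range_arrow by (fastforce simp: crossing_pairs_def arrows_from_to_def)

lemma finite_crossing_pairs: "finite (crossing_pairs j k)"
  by (simp add: crossing_pairs_def finite_arrows_from_to)


lemma crossing_pairsE:
  assumes "(s, t) \<in> crossing_pairs j k"
  obtains (from_j) a where "a \<in> arrows_from_to D j k" "s = pos (Tl a)" "t = pos (Hd a)"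
    | (from_k) a where "a \<in> arrows_from_to D k j" "s = pos (Hd a)" "t = pos (Tl a)"
  using assms unfolding crossing_pairs_def by blast

lemma crossing_pairs_iff:
  assumes jk: "j < length (fst D)" "k < length (fst D)" "j \<noteq> k"
    and st: "s \<in> {0..<1}" "t \<in> {0..<1}"
  shows "\<gamma> j s = \<gamma> k t \<longleftrightarrow> (s, t) \<in> crossing_pairs j k"
proof
  assume "\<gamma> j s = \<gamma> k t"
  then obtain a where "a \<in> gd_arrows D"
    "((j, s) = (circ D (Tl a), pos (Tl a)) \<and> (k, t) = (circ D (Hd a), pos (Hd a))) \<or>
     ((k, t) = (circ D (Tl a), pos (Tl a)) \<and> (j, s) = (circ D (Hd a), pos (Hd a)))"
    using double_points[OF jk(1,2) st] jk(3) by blast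
  then show "(s, t) \<in> crossing_pairs j k"
    unfolding crossing_pairs_def arrows_from_to_def by auto
next
  assume "(s, t) \<in> crossing_pairs j k"
  then show "\<gamma> j s = \<gamma> k t"
    by (cases rule: crossing_pairsE) (auto simp: arrows_from_to_def arrow_crossing)
qed

lemma crossing_pairs_simple:
  assumes "(s, t) \<in> crossing_pairs j k" "(s, t') \<in> crossing_pairs j k" "j \<noteq> k"
  shows "t = t'"
proof -
  have same_arrow: "a = b" if "a \<in> gd_arrows D" "b \<in> gd_arrows D" "e \<in> {Tl a, Hd a}"
    "e' \<in> {Tl b, Hd b}" "circ D e = j" "circ D e' = j" "pos e = s" "pos e' = s"
    for a b e e'
    using endpoint_eqI[OF that(1-4)] that by auto
  from assms(1) show ?thesis
  proof (cases rule: crossing_pairsE)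
    case a: from_j
    from assms(2) show ?thesis
      by (cases rule: crossing_pairsE)
        (use a assms(3) same_arrow in \<open>auto simp: arrows_from_to_def\<close>)
  next
    case a: from_k
    from assms(2) show ?thesis
      by (cases rule: crossing_pairsE)
        (use a assms(3) same_arrow in \<open>auto simp: arrows_from_to_def\<close>)
  qed
qed


lemma crossing_pairs_sign_sum:
  assumes "j \<noteq> k"
  shows "(\<Sum>(s, t)\<in>crossing_pairs j k. sgn (wedge (\<gamma>' k t) (\<gamma>' j s)))
    = of_int (forbidden_matrix D k j - forbidden_matrix D j k)"
proof -
  let ?A1 = "arrows_from_to D j k" and ?A2 = "arrows_from_to D k j"
  have eq: "e = e'" if "a \<in> gd_arrows D" "b \<in> gd_arrows D" "e \<in> {Tl a, Hd a}" "e' \<in> {Tl b, Hd b}"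
    "circ D e = j" "circ D e' = j" "pos e = pos e'" for a b e e'
    using endpoint_eqI[OF that(1-4)] that(5-7) by simp
  have "inj_on (\<lambda>a. (pos (Tl a), pos (Hd a))) ?A1" "inj_on (\<lambda>a. (pos (Hd a), pos (Tl a))) ?A2"
    using eq by (auto intro!: inj_onI simp: arrows_from_to_def)
  moreover have "(\<lambda>a. (pos (Tl a), pos (Hd a))) ` ?A1 \<inter> (\<lambda>a. (pos (Hd a), pos (Tl a))) ` ?A2 = {}"
    using eq by (fastforce simp: arrows_from_to_def)
  moreover have "sgn (wedge (\<gamma>' k (pos (Hd a))) (\<gamma>' j (pos (Tl a)))) = - of_int (snd D a)" if "a \<in> ?A1" for a
    using arrow_sign[of a] that by (auto simp: arrows_from_to_def wedge_swap[of "\<gamma>' j _"] sgn_minus)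
  moreover have "sgn (wedge (\<gamma>' k (pos (Tl a))) (\<gamma>' j (pos (Hd a)))) = of_int (snd D a)" if "a \<in> ?A2" for a
    using arrow_sign[of a] that by (auto simp: arrows_from_to_def)
  ultimately show ?thesis
    by (simp add: crossing_pairs_def sum.union_disjoint finite_arrows_from_to sum.reindex
        forbidden_matrix_eq_sum sum_negf)
qed

lemma crossing_pairs_transversal:
  assumes "(s, t) \<in> crossing_pairs j k"
  shows "wedge (\<gamma>' k t) (\<gamma>' j s) \<noteq> 0"
proof -
  have "snd D a = 1 \<or> snd D a = -1" if "a \<in> gd_arrows D" for a
    using wf that unfolding wf_gd_def by (metis (no_types, lifting))
  then have nonzero: "sgn (wedge (\<gamma>' (circ D (Tl a)) (pos (Tl a))) (\<gamma>' (circ D (Hd a)) (pos (Hd a)))) \<noteq> 0"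
    if "a \<in> gd_arrows D" for a
    using that arrow_sign[OF that] by fastforce
  from assms show ?thesis
  proof (cases rule: crossing_pairsE)
    case (from_j a)
    then show ?thesis
      using nonzero[of a] wedge_swap[of "\<gamma>' j s" "\<gamma>' k t"] by (auto simp: arrows_from_to_def)
  next
    case (from_k a)
    then show ?thesis using nonzero[of a] by (auto simp: arrows_from_to_def)
  qed
qed

lemma forbidden_matrix_symmetric:
  assumes "j < length (fst D)" "k < length (fst D)"
  shows "forbidden_matrix D j k = forbidden_matrix D k j"
proof (cases "j = k")
  case False
  have "crossing_loops (\<gamma> k) (\<gamma> j) (\<gamma>' k) (\<gamma>' j) (crossing_pairs j k)"
  proof
    show "\<gamma> k (t + 1) = \<gamma> k t" "\<gamma> j (t + 1) = \<gamma> j t" for t using periodic assms by blast+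
    show "(\<gamma> k has_vector_derivative \<gamma>' k t) (at t)" "(\<gamma> j has_vector_derivative \<gamma>' j t) (at t)" for t
      using derivative assms by blast+
    show "s \<in> {0..<1} \<Longrightarrow> t \<in> {0..<1} \<Longrightarrow> \<gamma> j s = \<gamma> k t \<longleftrightarrow> (s, t) \<in> crossing_pairs j k" for s t
      by (rule crossing_pairs_iff[OF assms False])
    show "(s, t) \<in> crossing_pairs j k \<Longrightarrow> (s, t') \<in> crossing_pairs j k \<Longrightarrow> t = t'" for s t t'
      using crossing_pairs_simple False by blast
  qed (use finite_crossing_pairs crossing_pairs_subset crossing_pairs_transversal in auto)
  then have "(\<Sum>(s, t)\<in>crossing_pairs j k. sgn (wedge (\<gamma>' k t) (\<gamma>' j s))) = 0"
    by (rule crossing_loops.crossing_signs_sum_zero)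
  then show ?thesis using crossing_pairs_sign_sum[OF False] by simp
qed simp

end

corollary planar_gd_forbidden_matrix_symmetric:
  assumes "planar_gd D" "j < length (fst D)" "k < length (fst D)"
  shows "forbidden_matrix D j k = forbidden_matrix D k j"
  using planar_gd_realization[OF assms(1)] planar_realization.forbidden_matrix_symmetric assms(2,3)
  by metis

theorem mainTheorem3:
  fixes D D' :: gd
  assumes "planar_gd D"
    and "gd_equiv D D'"
    and "reduced_gd D'"
  shows "\<forall>j < length (fst D'). \<forall>k < length (fst D').
           forbidden_matrix D' j k = forbidden_matrix D' k j"
proof (intro allI impI)
  fix j k assume "j < length (fst D')" "k < length (fst D')"
  then have "forbidden_matrix D j k = forbidden_matrix D k j"
    using planar_gd_forbidden_matrix_symmetric[OF assms(1)] gd_equiv_forbidden_matrix(1)[OF assms(2)]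
    by simp
  then show "forbidden_matrix D' j k = forbidden_matrix D' k j"
    using gd_equiv_forbidden_matrix(2)[OF assms(2)] by (cases "j = k") simp_all
qed

end
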